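(* Let $\Gamma$ be a competitive population network game, $\beta>0$, $\lambda\ge0$, and let $\sigma^2_{js}\ge0$ ($j\in V$, $s\in S_j$) be the initial variances of the belief components of an initially heterogeneous system. Then $\Gamma$ has a unique QRE $\mathbf{x}^\ast$, and every solution of the mean belief dynamics $$\frac{d\bar{\mu}_{is}}{dt}=\frac{f_{i,s}(\bar{\boldsymbol{\mu}})-\bar{\mu}_{is}}{\lambda+t+1}+\frac{\sum_{j\in V_i}\sum_{s'\in S_j}\frac{\partial^2 f_{i,s}}{\partial\mu_{js'}^2}(\bar{\boldsymbol{\mu}})\,\mathrm{Var}(\mu_{js'})(t)}{2(\lambda+t+1)},\qquad \mathrm{Var}(\mu_{js'})(t)=\Big(\tfrac{\lambda+1}{\lambda+t+1}\Big)^2\sigma^2_{js'},$$ ($i\in V$, $s\in S_i$) with initial mean beliefs $\bar{\boldsymbol{\mu}}(0)\in\prod_{i\in V}\Delta_i$ converges to $\mathbf{x}^\ast$ as $t\to\infty$.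
   Context: A population network game $\Gamma$ consists of a finite undirected graph with vertex set $V=\{1,\dots,n\}$ (populations) and edge set $E$; $V_i=\{j:\{i,j\}\in E\}$. Population $i$ has finite strategy set $S_i$, $\Delta_i\subset\mathbb{R}^{|S_i|}$ is the probability simplex, and each edge $\{i,j\}$ carries payoff matrices $\mathbf{A}_{ij}\in\mathbb{R}^{|S_i|\times|S_j|}$, $\mathbf{A}_{ji}\in\mathbb{R}^{|S_j|\times|S_i|}$. With $r_i(\mathbf{x})=\sum_{j\in V_i}\mathbf{x}_i^\top\mathbf{A}_{ij}\mathbf{x}_j$, $\Gamma$ is competitive (weighted zero-sum) if there exist $\omega_i>0$ with $\sum_{i\in V}\omega_ir_i(\mathbf{x})=0$ for all $\mathbf{x}\in\prod_i\Delta_i$. The logit choice function is $f_{i,s}(\{\boldsymbol{\mu}_j\}_{j\in V_i})=\exp\big(\beta\sum_{j\in V_i}\mathbf{e}_s^\top\mathbf{A}_{ij}\boldsymbol{\mu}_j\big)/\sum_{s'\in S_i}\exp\big(\beta\sum_{j\in V_i}\mathbf{e}_{s'}^\top\mathbf{A}_{ij}\boldsymbol{\mu}_j\big)$ ($\mathbf{e}_s$ the $s$-th unit vector), viewed as a smooth function on $\prod_{j\in V_i}\mathbb{R}^{|S_j|}$; $f_{i,s}(\bar{\boldsymbol{\mu}})$ means $f_{i,s}(\{\bar{\boldsymbol{\mu}}_j\}_{j\in V_i})$. A QRE is $\mathbf{x}^\ast\in\prod_i\Delta_i$ with $x^\ast_{is}=f_{i,s}(\{\mathbf{x}^\ast_j\}_{j\in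 V_i})$ for all $i,s$. In an initially heterogeneous system, $\bar{\boldsymbol{\mu}}_j$ is the mean belief about population $j$ across the system and $\mathrm{Var}(\mu_{js'})$ the variance of the belief component $\mu_{js'}$. *)

theory Defs
  imports "HOL-Analysis.Analysis"
begin

text \<open>Populations are 0..<n; population i has strategies 0..<m i.
  The graph is a symmetric irreflexive relation E on 0..<n.
  Profiles / belief vectors are functions nat => nat => real (population, strategy).\<close>

definition nbrs :: "nat \<Rightarrow> (nat \<Rightarrow> nat \<Rightarrow> bool) \<Rightarrow> nat \<Rightarrow> nat set" where
  "nbrs n E i = {j. j < n \<and> E i j}"

text \<open>Point of the product of simplices (extended by 0 outside the index range,
  so that profiles are uniquely determined).\<close>
definition in_profile :: "nat \<Rightarrow> (nat \<Rightarrow> nat) \<Rightarrow> (nat \<Rightarrow> nat \<Rightarrow> real) \<Rightarrow> bool" where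
  "in_profile n m x \<longleftrightarrow>
     (\<forall>i<n. (\<forall>s<m i. x i s \<ge> 0) \<and> (\<Sum>s<m i. x i s) = 1) \<and>
     (\<forall>i s. (i \<ge> n \<or> s \<ge> m i) \<longrightarrow> x i s = 0)"

definition in_simplices :: "nat \<Rightarrow> (nat \<Rightarrow> nat) \<Rightarrow> (nat \<Rightarrow> nat \<Rightarrow> real) \<Rightarrow> bool" where
  "in_simplices n m x \<longleftrightarrow> (\<forall>i<n. (\<forall>s<m i. x i s \<ge> 0) \<and> (\<Sum>s<m i. x i s) = 1)"

definition payoff :: "nat \<Rightarrow> (nat \<Rightarrow> nat) \<Rightarrow> (nat \<Rightarrow> nat \<Rightarrow> bool)
    \<Rightarrow> (nat \<Rightarrow> nat \<Rightarrow> nat \<Rightarrow> nat \<Rightarrow> real) \<Rightarrow> nat \<Rightarrow> (nat \<Rightarrow> nat \<Rightarrow> real) \<Rightarrow> real" where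
  "payoff n m E A i x =
     (\<Sum>j\<in>nbrs n E i. \<Sum>s<m i. \<Sum>s'<m j. x i s * A i j s s' * x j s')"

definition competitive :: "nat \<Rightarrow> (nat \<Rightarrow> nat) \<Rightarrow> (nat \<Rightarrow> nat \<Rightarrow> bool)
    \<Rightarrow> (nat \<Rightarrow> nat \<Rightarrow> nat \<Rightarrow> nat \<Rightarrow> real) \<Rightarrow> bool" where
  "competitive n m E A \<longleftrightarrow>
     (\<exists>\<omega>::nat \<Rightarrow> real. (\<forall>i<n. \<omega> i > 0) \<and>
        (\<forall>x. in_profile n m x \<longrightarrow> (\<Sum>i<n. \<omega> i * payoff n m E A i x) = 0))"

text \<open>Logit choice function f_{i,s}, as a function of the whole belief array
  (it only depends on the beliefs about neighbours).\<close>
definition logit :: "nat \<Rightarrow> (nat \<Rightarrow> nat) \<Rightarrow> (nat \<Rightarrow> nat \<Rightarrow> bool)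
    \<Rightarrow> (nat \<Rightarrow> nat \<Rightarrow> nat \<Rightarrow> nat \<Rightarrow> real) \<Rightarrow> real \<Rightarrow> nat \<Rightarrow> nat \<Rightarrow> (nat \<Rightarrow> nat \<Rightarrow> real) \<Rightarrow> real" where
  "logit n m E A \<beta> i s mu =
     exp (\<beta> * (\<Sum>j\<in>nbrs n E i. \<Sum>s'<m j. A i j s s' * mu j s')) /
     (\<Sum>s''<m i. exp (\<beta> * (\<Sum>j\<in>nbrs n E i. \<Sum>s'<m j. A i j s'' s' * mu j s')))"

definition is_QRE :: "nat \<Rightarrow> (nat \<Rightarrow> nat) \<Rightarrow> (nat \<Rightarrow> nat \<Rightarrow> bool)
    \<Rightarrow> (nat \<Rightarrow> nat \<Rightarrow> nat \<Rightarrow> nat \<Rightarrow> real) \<Rightarrow> real \<Rightarrow> (nat \<Rightarrow> nat \<Rightarrow> real) \<Rightarrow> bool" where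
  "is_QRE n m E A \<beta> x \<longleftrightarrow> in_profile n m x \<and>
     (\<forall>i<n. \<forall>s<m i. x i s = logit n m E A \<beta> i s x)"

definition upd_comp :: "(nat \<Rightarrow> nat \<Rightarrow> real) \<Rightarrow> nat \<Rightarrow> nat \<Rightarrow> real \<Rightarrow> nat \<Rightarrow> nat \<Rightarrow> real" where
  "upd_comp mu j s' w = mu(j := (mu j)(s' := w))"

definition partial2 :: "((nat \<Rightarrow> nat \<Rightarrow> real) \<Rightarrow> real) \<Rightarrow> (nat \<Rightarrow> nat \<Rightarrow> real) \<Rightarrow> nat \<Rightarrow> nat \<Rightarrow> real" where
  "partial2 F mu j s' = deriv (\<lambda>z. deriv (\<lambda>w. F (upd_comp mu j s' w)) z) (mu j s')"

definition mean_belief_solution :: "nat \<Rightarrow> (nat \<Rightarrow> nat) \<Rightarrow> (nat \<Rightarrow> nat \<Rightarrow> bool)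
    \<Rightarrow> (nat \<Rightarrow> nat \<Rightarrow> nat \<Rightarrow> nat \<Rightarrow> real) \<Rightarrow> real \<Rightarrow> real \<Rightarrow> (nat \<Rightarrow> nat \<Rightarrow> real)
    \<Rightarrow> (real \<Rightarrow> nat \<Rightarrow> nat \<Rightarrow> real) \<Rightarrow> bool" where
  "mean_belief_solution n m E A \<beta> lam \<sigma>2 mu \<longleftrightarrow>
     (\<forall>t\<ge>0. \<forall>i<n. \<forall>s<m i.
        ((\<lambda>\<tau>. mu \<tau> i s) has_real_derivative
           ((logit n m E A \<beta> i s (mu t) - mu t i s) / (lam + t + 1)
            + (\<Sum>j\<in>nbrs n E i. \<Sum>s'<m j.
                 partial2 (logit n m E A \<beta> i s) (mu t) j s'
                 * (((lam + 1) / (lam + t + 1))\<^sup>2 * \<sigma>2 j s'))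
              / (2 * (lam + t + 1))))
        (at t within {0..}))"

end

theory Submission
  imports Defs
begin

(* The weighted Kullback-Leibler divergence V x = sum_i w_i KL(x_i || f_i x), with the weights
   w_i of the competitiveness condition, is a Lyapunov function. Weighted zero-sum makes the
   cross payoff form sum_i w_i <a_i, u_i b> antisymmetric on the product of simplices, so along
   the flow dx/dt = (f x - x) / (lam + t + 1) one gets
     (lam + t + 1) dV/dt = - sum_i w_i <f_i - x_i, ln f_i - ln x_i>,
   which is at most - V.  The variance term is O((lam + t + 1)^-3), because the second
   derivatives of the logit map are bounded and sum to zero over each population; hence the
   beliefs stay in the product of simplices, are eventually bounded away from its boundary,
   (lam + t + 1) V stays bounded and V tends to 0.  A minimiser of V over a compact part of the
   product of simplices is a fixed point of the logit map, and at a QRE x* the identity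
   sum_i w_i <x_i - x*_i, ln f_i x - ln x*_i> = 0 yields both uniqueness and the convergence of
   the beliefs to x*. *)

lemma kl_term_ge_hellinger_term:
  fixes a b :: real assumes a: "0 < a" and b: "0 < b"
  shows "a - b + (sqrt a - sqrt b)^2 \<le> a * (ln a - ln b)"
proof -
  have sa: "sqrt a > 0" and sb: "sqrt b > 0" using a b by auto
  have "ln (sqrt b / sqrt a) \<le> sqrt b / sqrt a - 1"
    using sa sb by (intro ln_le_minus_one) auto
  moreover have "ln (sqrt b / sqrt a) = (ln b - ln a) / 2"
    using a b by (simp add: ln_div ln_sqrt)
  ultimately have "ln b - ln a \<le> 2 * (sqrt b / sqrt a - 1)" using sa by (simp add: field_simps)
  then have "a * (ln b - ln a) \<le> a * (2 * (sqrt b / sqrt a - 1))"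
    using a by (intro mult_left_mono) auto
  also have "a * (2 * (sqrt b / sqrt a - 1)) = 2 * sqrt a * sqrt b - 2 * a"
    using sa by (simp add: field_simps)
  finally have "a * (ln b - ln a) \<le> 2 * sqrt a * sqrt b - 2 * a" .
  moreover have "(sqrt a - sqrt b)^2 = a + b - 2 * sqrt a * sqrt b"
    using a b by (simp add: power2_diff)
  ultimately show ?thesis by (simp add: algebra_simps)
qed

lemma diff_sq_le_sqrt_diff_sq:
  fixes a b :: real assumes "0 \<le> a" "a \<le> 1" "0 \<le> b" "b \<le> 1"
  shows "(a - b)^2 \<le> 4 * (sqrt a - sqrt b)^2"
proof -
  have e: "a - b = (sqrt a - sqrt b) * (sqrt a + sqrt b)"
    using assms by (simp add: algebra_simps)
  have "sqrt a + sqrt b \<le> 2" using assms by (smt (verit) real_sqrt_le_1_iff)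
  moreover have "0 \<le> sqrt a + sqrt b" using assms by simp
  ultimately have "(sqrt a + sqrt b)^2 \<le> 2^2" by (intro power_mono) auto
  then have "(a - b)^2 = (sqrt a - sqrt b)^2 * (sqrt a + sqrt b)^2 \<and> (sqrt a - sqrt b)^2
    * (sqrt a + sqrt b)^2 \<le> (sqrt a - sqrt b)^2 * 4"
    by (simp add: e power_mult_distrib mult_left_mono)
  then show ?thesis by simp
qed

lemma diff_sq_le_diff_mult_ln_diff:
  fixes a b :: real assumes "0 < a" "a \<le> 1" "0 < b" "b \<le> 1"
  shows "(a - b)^2 \<le> (a - b) * (ln a - ln b)"
proof -
  have key: "(p - q)^2 \<le> (p - q) * (ln p - ln q)" if "0 < q" "q \<le> p" "p \<le> 1" for p q :: real
  proof -
    have "ln (q / p) \<le> q / p - 1" using that by (intro ln_le_minus_one) auto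
    then have "ln p - ln q \<ge> (p - q) / p" using that by (simp add: ln_div field_simps)
    moreover have "(p - q) / p \<ge> p - q"
    proof -
      have "(p - q) * p \<le> (p - q) * 1" using that by (intro mult_left_mono) auto
      then show ?thesis using that by (simp add: field_simps)
    qed
    ultimately have "ln p - ln q \<ge> p - q" by linarith
    then have "(p - q) * (p - q) \<le> (p - q) * (ln p - ln q)"
      using that by (intro mult_left_mono) auto
    then show ?thesis by (simp add: power2_eq_square)
  qed
  show ?thesis
  proof (cases "b \<le> a")
    case True then show ?thesis using key assms by auto
  next
    case False
    then have "(b - a)^2 \<le> (b - a) * (ln b - ln a)" using key assms by auto
    then show ?thesis by (simp add: power2_commute algebra_simps)
  qed
qed

lemma abs_ln_diff_le:
  fixes a b d :: real assumes "0 < d" "d \<le> a" "d \<le> b"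
  shows "\<bar>ln a - ln b\<bar> \<le> \<bar>a - b\<bar> / d"
proof -
  have key: "ln p - ln q \<le> (p - q) / d" if "d \<le> q" "q \<le> p" for p q :: real
  proof -
    have "ln (p / q) \<le> p / q - 1" using that assms by (intro ln_le_minus_one) auto
    then have "ln p - ln q \<le> (p - q) / q" using that assms by (simp add: ln_div field_simps)
    also have "\<dots> \<le> (p - q) / d" using that assms by (intro divide_left_mono) auto
    finally show ?thesis .
  qed
  show ?thesis
  proof (cases "b \<le> a")
    case True
    then have "0 \<le> ln a - ln b" using assms by simp
    then show ?thesis using key[of b a] True assms by auto
  next
    case False
    then have "0 \<le> ln b - ln a" using assms by simp
    then show ?thesis using key[of a b] False assms by auto
  qed
qed

lemma DERIV_within_nonneg_imp_le:
  fixes \<phi> \<phi>' :: "real \<Rightarrow> real"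
  assumes ab: "a \<le> b" and S: "{a..b} \<subseteq> S"
    and d: "\<And>t. a \<le> t \<Longrightarrow> t \<le> b \<Longrightarrow> (\<phi> has_real_derivative \<phi>' t) (at t within S)"
    and nn: "\<And>t. a < t \<Longrightarrow> t < b \<Longrightarrow> 0 \<le> \<phi>' t"
  shows "\<phi> a \<le> \<phi> b"
proof (rule DERIV_nonneg_imp_increasing_open[OF ab])
  fix t assume t: "a < t" "t < b"
  have "t \<in> interior S" using t interior_mono[OF S] by auto
  then have "at t within S = at t" by (rule at_within_interior)
  then show "\<exists>y. DERIV \<phi> t :> y \<and> 0 \<le> y" using d[of t] nn[OF t] t by auto
next
  show "continuous_on {a..b} \<phi>"
    unfolding continuous_on_eq_continuous_within
  proof
    fix t assume t: "t \<in> {a..b}"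
    have "continuous (at t within S) \<phi>" using d t by (intro DERIV_continuous) auto
    then show "continuous (at t within {a..b}) \<phi>" by (rule continuous_within_subset[OF _ S])
  qed
qed

lemma DERIV_within_zero_imp_eq:
  fixes \<phi> \<phi>' :: "real \<Rightarrow> real"
  assumes ab: "a \<le> b" and S: "{a..b} \<subseteq> S"
    and d: "\<And>t. a \<le> t \<Longrightarrow> t \<le> b \<Longrightarrow> (\<phi> has_real_derivative \<phi>' t) (at t within S)"
    and z: "\<And>t. a < t \<Longrightarrow> t < b \<Longrightarrow> \<phi>' t = 0"
  shows "\<phi> a = \<phi> b"
proof (rule antisym)
  show "\<phi> a \<le> \<phi> b"
    by (rule DERIV_within_nonneg_imp_le[where \<phi> = \<phi> and \<phi>' = \<phi>']) (use ab S d z in auto)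
  have "- \<phi> a \<le> - \<phi> b"
    by (rule DERIV_within_nonneg_imp_le[where \<phi> = "\<lambda>t. - \<phi> t" and \<phi>' = "\<lambda>t. - \<phi>' t"])
      (use ab S z in \<open>auto intro: DERIV_minus d\<close>)
  then show "\<phi> b \<le> \<phi> a" by simp
qed

lemma bounded_imp_common_convergent_subseq:
  fixes X :: "nat \<Rightarrow> 'k \<Rightarrow> real"
  assumes "finite K" and bnd: "\<And>k j. k \<in> K \<Longrightarrow> \<bar>X j k\<bar> \<le> C"
  shows "\<exists>r. strict_mono r \<and> (\<forall>k\<in>K. convergent (\<lambda>j. X (r j) k))"
  using assms
proof (induction K rule: finite_induct)
  case empty
  show ?case by (rule exI[of _ id]) (auto simp: strict_mono_def)
next
  case (insert k K)
  have bK: "\<And>k j. k \<in> K \<Longrightarrow> \<bar>X j k\<bar> \<le> C" using insert.prems by blast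
  have bk: "\<And>j. \<bar>X j k\<bar> \<le> C" using insert.prems by blast
  obtain r where r: "strict_mono r" "\<forall>k\<in>K. convergent (\<lambda>j. X (r j) k)"
    using insert.IH[OF bK] by blast
  obtain r2 where r2: "strict_mono r2" "monoseq (\<lambda>j. X (r (r2 j)) k)"
    using seq_monosub[of "\<lambda>j. X (r j) k"] by (auto simp: o_def)
  have "Bseq (\<lambda>j. X (r (r2 j)) k)"
    by (rule BseqI'[where K = C]) (simp add: bk)
  then have ck: "convergent (\<lambda>j. X (r (r2 j)) k)" using r2(2) Bseq_monoseq_convergent by blast
  have cK: "convergent (\<lambda>j. X (r (r2 j)) k')" if "k' \<in> K" for k'
    using convergent_subseq_convergent[OF r(2)[rule_format, OF that] r2(1)] by (simp add: o_def)
  have "strict_mono (\<lambda>j. r (r2 j))" by (rule strict_mono_compose[OF r(1) r2(1)])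
  moreover have "\<forall>k'\<in>insert k K. convergent (\<lambda>j. X (r (r2 j)) k')" using ck cK by blast
  ultimately show ?case by blast
qed

text \<open>With all other beliefs fixed, the logit response as a function of one belief component w
  is prob s w for suitable scores a and b; d1 and d2 are its first two derivatives in w.\<close>
locale softmax_line =
  fixes M :: nat and a b :: "nat \<Rightarrow> real"
  assumes M_pos: "0 < M"
begin

definition denom :: "real \<Rightarrow> real" where
  "denom w = (\<Sum>k<M. exp (a k * w + b k))"

definition prob :: "nat \<Rightarrow> real \<Rightarrow> real" where
  "prob s w = exp (a s * w + b s) / denom w"

definition mean :: "real \<Rightarrow> real" where
  "mean w = (\<Sum>k<M. prob k w * a k)"

definition d1 :: "nat \<Rightarrow> real \<Rightarrow> real" where
  "d1 s w = prob s w * (a s - mean w)"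

definition d2 :: "nat \<Rightarrow> real \<Rightarrow> real" where
  "d2 s w = d1 s w * (a s - mean w) - prob s w * (\<Sum>k<M. d1 k w * a k)"

lemma denom_pos: "denom w > 0"
  unfolding denom_def using M_pos by (intro sum_pos) auto

lemma prob_pos: "prob s w > 0"
  using denom_pos by (simp add: prob_def)

lemma sum_prob: "(\<Sum>k<M. prob k w) = 1"
  using denom_pos[of w] by (simp add: prob_def sum_divide_distrib[symmetric] denom_def)

lemma prob_le_1: "s < M \<Longrightarrow> prob s w \<le> 1"
  using member_le_sum[of s "{..<M}" "\<lambda>k. prob k w"] prob_pos sum_prob by (simp add: less_imp_le)

lemma denom_has_derivative:
  "(denom has_real_derivative (\<Sum>k<M. exp (a k * w + b k) * a k)) (at w)"
  unfolding denom_def by (auto intro!: derivative_eq_intros)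

lemma prob_has_derivative: "(prob s has_real_derivative d1 s w) (at w)"
proof -
  have e: "((\<lambda>w. exp (a s * w + b s)) has_real_derivative exp (a s * w + b s) * a s) (at w)"
    by (auto intro!: derivative_eq_intros)
  have p: "denom w > 0" using denom_pos .
  show ?thesis
    unfolding prob_def[abs_def]
    by (rule DERIV_cong[OF DERIV_divide[OF e denom_has_derivative]])
      (use p in \<open>simp_all add: d1_def mean_def prob_def sum_divide_distrib[symmetric]
         field_simps power2_eq_square sum_distrib_left mult.assoc\<close>)
qed

lemma mean_has_derivative: "(mean has_real_derivative (\<Sum>k<M. d1 k w * a k)) (at w)"
  unfolding mean_def[abs_def] by (intro DERIV_sum DERIV_cmult_right prob_has_derivative)

lemma d1_has_derivative: "(d1 s has_real_derivative d2 s w) (at w)"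
  unfolding d1_def[abs_def]
  by (rule DERIV_cong[OF DERIV_mult[OF prob_has_derivative
    DERIV_diff[OF DERIV_const mean_has_derivative]]])
    (simp add: d2_def algebra_simps)

lemma sum_d1: "(\<Sum>s<M. d1 s w) = 0"
  unfolding d1_def
  by (simp add: right_diff_distrib sum_subtractf sum_distrib_right[symmetric] sum_prob mean_def)

lemma sum_d2: "(\<Sum>s<M. d2 s w) = 0"
proof -
  have "(\<Sum>s<M. d2 s w) = (\<Sum>s<M. d1 s w * (a s - mean w))
      - (\<Sum>s<M. prob s w) * (\<Sum>k<M. d1 k w * a k)"
    unfolding d2_def by (simp add: sum_subtractf sum_distrib_right)
  also have "(\<Sum>s<M. d1 s w * (a s - mean w)) = (\<Sum>s<M. d1 s w * a s) - mean w * (\<Sum>s<M. d1 s w)"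
    by (simp add: right_diff_distrib sum_subtractf sum_distrib_left mult.commute)
  finally show ?thesis using sum_d1 sum_prob by simp
qed

lemma abs_d2_le:
  assumes s: "s < M" and amax: "\<And>k. k < M \<Longrightarrow> \<bar>a k\<bar> \<le> amax"
  shows "\<bar>d2 s w\<bar> \<le> 6 * amax^2"
proof -
  have a0: "0 \<le> amax" using amax[OF s] by linarith
  have "\<bar>mean w\<bar> \<le> (\<Sum>k<M. prob k w * \<bar>a k\<bar>)"
    unfolding mean_def by (rule order_trans[OF sum_abs]) (simp add: abs_mult less_imp_le prob_pos)
  also have "\<dots> \<le> (\<Sum>k<M. prob k w * amax)"
    using prob_pos amax by (intro sum_mono mult_left_mono) (auto intro: less_imp_le)
  also have "\<dots> = amax" using sum_prob by (simp add: sum_distrib_right[symmetric])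
  finally have dk: "\<bar>a k - mean w\<bar> \<le> 2 * amax" if "k < M" for k
    using amax[OF that] by linarith
  have d1: "\<bar>d1 k w\<bar> \<le> prob k w * (2 * amax)" if "k < M" for k
    unfolding d1_def abs_mult abs_of_pos[OF prob_pos] using prob_pos[of k w] dk[OF that]
    by (intro mult_left_mono) auto
  have d1': "\<bar>d1 k w\<bar> \<le> 2 * amax" if "k < M" for k
    using d1[OF that] mult_right_mono[OF prob_le_1[OF that], of "2 * amax" w] a0 by simp
  have "\<bar>\<Sum>k<M. d1 k w * a k\<bar> \<le> (\<Sum>k<M. prob k w * (2 * amax) * amax)"
    by (rule order_trans[OF sum_abs], intro sum_mono, unfold abs_mult)
      (intro mult_mono d1 amax, auto intro: mult_nonneg_nonneg less_imp_le prob_pos a0)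
  also have "\<dots> = 2 * amax^2"
    using sum_prob by (simp add: sum_distrib_right[symmetric] power2_eq_square)
  finally have t2: "\<bar>\<Sum>k<M. d1 k w * a k\<bar> \<le> 2 * amax^2" .
  have "\<bar>d2 s w\<bar> \<le> \<bar>d1 s w\<bar> * \<bar>a s - mean w\<bar> + prob s w * \<bar>\<Sum>k<M. d1 k w * a k\<bar>"
    unfolding d2_def using prob_pos[of s w]
    by (metis (no_types, lifting) abs_mult abs_of_pos abs_triangle_ineq4)
  also have "\<dots> \<le> (2 * amax) * (2 * amax) + 1 * (2 * amax^2)"
    using d1'[OF s] dk[OF s] t2 prob_le_1[OF s, of w] prob_pos[of s w] a0
    by (intro add_mono mult_mono) auto
  finally show ?thesis by (simp add: power2_eq_square)
qed

end

locale zero_sum_network =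
  fixes n :: nat and m :: "nat \<Rightarrow> nat" and E :: "nat \<Rightarrow> nat \<Rightarrow> bool"
    and A :: "nat \<Rightarrow> nat \<Rightarrow> nat \<Rightarrow> nat \<Rightarrow> real" and \<beta> :: real and \<omega> :: "nat \<Rightarrow> real"
  assumes m_pos: "\<And>i. i < n \<Longrightarrow> m i > 0"
    and beta_pos: "\<beta> > 0"
    and weight_pos: "\<And>i. i < n \<Longrightarrow> \<omega> i > 0"
    and zero_sum: "\<And>x. in_profile n m x \<Longrightarrow> (\<Sum>i<n. \<omega> i * payoff n m E A i x) = 0"
begin

abbreviation N where "N i \<equiv> nbrs n E i"

definition util :: "nat \<Rightarrow> nat \<Rightarrow> (nat \<Rightarrow> nat \<Rightarrow> real) \<Rightarrow> real" where
  "util i s x = (\<Sum>j\<in>N i. \<Sum>s'<m j. A i j s s' * x j s')"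

definition logit_denom :: "nat \<Rightarrow> (nat \<Rightarrow> nat \<Rightarrow> real) \<Rightarrow> real" where
  "logit_denom i x = (\<Sum>s<m i. exp (\<beta> * util i s x))"

abbreviation f where "f i s x \<equiv> logit n m E A \<beta> i s x"

lemma logit_eq: "f i s x = exp (\<beta> * util i s x) / logit_denom i x"
  by (simp add: logit_def util_def logit_denom_def)

lemma nbrs_subset: "N i \<subseteq> {..<n}"
  by (auto simp: nbrs_def)

lemma finite_nbrs[simp]: "finite (N i)"
  using nbrs_subset finite_subset by blast

lemma nbrs_less: "j \<in> N i \<Longrightarrow> j < n"
  using nbrs_subset by blast

lemma logit_denom_pos: "i < n \<Longrightarrow> logit_denom i x > 0"
  unfolding logit_denom_def using m_pos[of i]
  by (intro sum_pos) auto

lemma logit_pos: "i < n \<Longrightarrow> f i s x > 0"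
  using logit_denom_pos by (simp add: logit_eq)

lemma sum_logit: "i < n \<Longrightarrow> (\<Sum>s<m i. f i s x) = 1"
  using logit_denom_pos[of i x]
    by (simp add: logit_eq sum_divide_distrib[symmetric] logit_denom_def)

lemma logit_le_1: "i < n \<Longrightarrow> s < m i \<Longrightarrow> f i s x \<le> 1"
proof -
  assume a: "i < n" "s < m i"
  have "f i s x \<le> (\<Sum>s<m i. f i s x)"
    using a logit_pos by (intro member_le_sum) (auto intro: less_imp_le)
  then show ?thesis using sum_logit a by simp
qed

lemma ln_logit: "i < n \<Longrightarrow> ln (f i s x) = \<beta> * util i s x - ln (logit_denom i x)"
  using logit_denom_pos[of i x] by (simp add: logit_eq ln_div)

definition wpayoff :: "(nat \<Rightarrow> nat \<Rightarrow> real) \<Rightarrow> (nat \<Rightarrow> nat \<Rightarrow> real) \<Rightarrow> real" where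
  "wpayoff a b = (\<Sum>i<n. \<omega> i * (\<Sum>s<m i. a i s * util i s b))"

lemma payoff_eq_util: "payoff n m E A i x = (\<Sum>s<m i. x i s * util i s x)"
  unfolding payoff_def util_def
  by (subst sum.swap) (simp add: sum_distrib_left mult.assoc)

lemma wpayoff_self_profile: "in_profile n m x \<Longrightarrow> wpayoff x x = 0"
  using zero_sum[of x] by (simp add: wpayoff_def payoff_eq_util)

text \<open>Unlike in_simplices, in_profile also demands zero entries outside the index range.\<close>
definition clip :: "(nat \<Rightarrow> nat \<Rightarrow> real) \<Rightarrow> nat \<Rightarrow> nat \<Rightarrow> real" where
  "clip x = (\<lambda>i s. if i < n \<and> s < m i then x i s else 0)"

lemma in_profile_clip: "in_simplices n m x \<Longrightarrow> in_profile n m (clip x)"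
  unfolding in_profile_def in_simplices_def clip_def by auto

lemma util_clip: "util i s (clip x) = util i s x"
  unfolding util_def clip_def using nbrs_less by (intro sum.cong refl) auto

lemma wpayoff_clip: "wpayoff (clip a) (clip b) = wpayoff a b"
  unfolding wpayoff_def util_clip by (auto simp: clip_def intro!: sum.cong)

lemma wpayoff_self: "in_simplices n m x \<Longrightarrow> wpayoff x x = 0"
  using wpayoff_self_profile[OF in_profile_clip, of x] wpayoff_clip by simp

lemma util_linear: "util i s (\<lambda>j s'. p * a j s' + q * b j s') = p * util i s a + q * util i s b"
  unfolding util_def by (simp add: sum.distrib sum_distrib_left algebra_simps)

lemma util_diff: "util i s (\<lambda>j s'. a j s' - b j s') = util i s a - util i s b"
  unfolding util_def by (simp add: sum_subtractf algebra_simps)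

lemma wpayoff_linear_left: "wpayoff (\<lambda>i s. p * a i s + q * b i s) c
  = p * wpayoff a c + q * wpayoff b c"
  unfolding wpayoff_def by (simp add: sum.distrib sum_distrib_left algebra_simps)

lemma wpayoff_linear_right: "wpayoff c (\<lambda>i s. p * a i s + q * b i s)
  = p * wpayoff c a + q * wpayoff c b"
  unfolding wpayoff_def by (simp add: util_linear sum.distrib sum_distrib_left algebra_simps)

text \<open>Polarisation: the form vanishes on the diagonal of the convex set of profiles.\<close>
lemma wpayoff_antisym:
  assumes "in_simplices n m a" "in_simplices n m b"
  shows "wpayoff a b + wpayoff b a = 0"
proof -
  let ?c = "\<lambda>i s. (1/2) * a i s + (1/2) * b i s"
  have "in_simplices n m ?c"
    using assms unfolding in_simplices_def by (auto simp: sum.distrib sum_divide_distrib[symmetric])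
  then have "wpayoff ?c ?c = 0" by (rule wpayoff_self)
  also have "wpayoff ?c ?c = (1/2) * ((1/2) * wpayoff a a + (1/2) * wpayoff a b)
      + (1/2) * ((1/2) * wpayoff b a + (1/2) * wpayoff b b)"
    unfolding wpayoff_linear_left wpayoff_linear_right ..
  finally show ?thesis using wpayoff_self[OF assms(1)] wpayoff_self[OF assms(2)] by simp
qed

definition lyap :: "(nat \<Rightarrow> nat \<Rightarrow> real) \<Rightarrow> real" where
  "lyap x = (\<Sum>i<n. \<omega> i * (ln (logit_denom i x) + (\<Sum>s<m i. x i s * ln (x i s))))"

definition lyap_dir :: "(nat \<Rightarrow> nat \<Rightarrow> real) \<Rightarrow> (nat \<Rightarrow> nat \<Rightarrow> real) \<Rightarrow> real" where
  "lyap_dir x y = (\<Sum>i<n. \<omega> i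
    * (\<beta> * (\<Sum>s<m i. f i s x * util i s y) + (\<Sum>s<m i. y i s * (ln (x i s) + 1))))"

lemma util_has_derivative:
  assumes "\<And>j s'. j < n \<Longrightarrow> s' < m j \<Longrightarrow> ((\<lambda>\<tau>. x \<tau> j s') has_real_derivative x' j s') (at t within S)"
  shows "((\<lambda>\<tau>. util i s (x \<tau>)) has_real_derivative util i s x') (at t within S)"
  unfolding util_def
  by (intro DERIV_sum DERIV_cmult assms) (auto dest: nbrs_less)

lemma lyap_has_derivative:
  assumes d: "\<And>j s'. j < n \<Longrightarrow> s' < m j
    \<Longrightarrow> ((\<lambda>\<tau>. x \<tau> j s') has_real_derivative x' j s') (at t within S)"
    and pos: "\<And>j s'. j < n \<Longrightarrow> s' < m j \<Longrightarrow> x t j s' > 0"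
  shows "((\<lambda>\<tau>. lyap (x \<tau>)) has_real_derivative lyap_dir (x t) x') (at t within S)"
proof -
  have Zd: "((\<lambda>\<tau>. logit_denom i (x \<tau>)) has_real_derivative
      (\<Sum>s<m i. exp (\<beta> * util i s (x t)) * (\<beta> * util i s x'))) (at t within S)" for i
    unfolding logit_denom_def
    by (intro DERIV_sum DERIV_chain2[OF DERIV_exp] DERIV_cmult util_has_derivative d)
  have h1: "((\<lambda>\<tau>. ln (logit_denom i (x \<tau>))) has_real_derivative
      (\<beta> * (\<Sum>s<m i. f i s (x t) * util i s x'))) (at t within S)" if i: "i < n" for i
    by (rule DERIV_cong[OF DERIV_chain2[OF DERIV_ln_divide[OF logit_denom_pos[OF i]] Zd]])
      (use logit_denom_pos[OF i, of "x t"] in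
        \<open>simp add: logit_eq sum_distrib_left sum_divide_distrib field_simps\<close>)
  have h2: "((\<lambda>\<tau>. x \<tau> i s * ln (x \<tau> i s)) has_real_derivative x' i s * (ln (x t i s) + 1))
    (at t within S)"
    if i: "i < n" "s < m i" for i s
    by (rule DERIV_cong[OF DERIV_mult[OF d DERIV_chain2[OF DERIV_ln_divide[OF pos] d]]])
      (use i pos[OF i] in \<open>auto simp: field_simps\<close>)
  show ?thesis
    unfolding lyap_def lyap_dir_def
    by (intro DERIV_sum DERIV_cmult DERIV_add h1 h2) auto
qed

lemma in_simplices_logit: "in_simplices n m (\<lambda>i s. f i s x)"
  unfolding in_simplices_def using logit_pos sum_logit by (auto intro: less_imp_le)

definition dissipation :: "(nat \<Rightarrow> nat \<Rightarrow> real) \<Rightarrow> real" where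
  "dissipation x = (\<Sum>i<n. \<omega> i * (\<Sum>s<m i. (f i s x - x i s) * (ln (f i s x) - ln (x i s))))"

lemma wpayoff_diff_right: "wpayoff c (\<lambda>i s. a i s - b i s) = wpayoff c a - wpayoff c b"
  unfolding wpayoff_def by (simp add: util_diff sum_subtractf algebra_simps)

lemma sum_gap_mult_ln_logit: assumes x: "in_simplices n m x" and i: "i < n"
  shows "(\<Sum>s<m i. (f i s x - x i s) * ln (f i s x))
    = \<beta> * ((\<Sum>s<m i. f i s x * util i s x) - (\<Sum>s<m i. x i s * util i s x))"
proof -
  have sx: "(\<Sum>s<m i. x i s) = 1" using x i by (simp add: in_simplices_def)
  have "(\<Sum>s<m i. (f i s x - x i s) * ln (f i s x)) =
        (\<Sum>s<m i. \<beta> * (f i s x * util i s x - x i s * util i s x)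
          - ln (logit_denom i x) * (f i s x - x i s))"
    by (intro sum.cong refl) (simp add: ln_logit[OF i] algebra_simps)
  also have "\<dots> = \<beta> * ((\<Sum>s<m i. f i s x * util i s x) - (\<Sum>s<m i. x i s * util i s x))
       - ln (logit_denom i x) * ((\<Sum>s<m i. f i s x) - (\<Sum>s<m i. x i s))"
    by (simp only: sum_subtractf sum_distrib_left right_diff_distrib)
  finally show ?thesis using sx sum_logit[OF i] by simp
qed

lemma weighted_gap_mult_ln_logit: assumes x: "in_simplices n m x"
  shows "(\<Sum>i<n. \<omega> i * (\<Sum>s<m i. (f i s x - x i s) * ln (f i s x))) = \<beta> * wpayoff (\<lambda>i s. f i s x) x"
proof -
  have "(\<Sum>i<n. \<omega> i * (\<Sum>s<m i. (f i s x - x i s) * ln (f i s x))) =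
     (\<Sum>i<n. \<omega> i * (\<beta> * ((\<Sum>s<m i. f i s x * util i s x) - (\<Sum>s<m i. x i s * util i s x))))"
    using sum_gap_mult_ln_logit[OF x] by simp
  also have "\<dots> = \<beta> * (wpayoff (\<lambda>i s. f i s x) x - wpayoff x x)"
    by (simp add: wpayoff_def sum_subtractf sum_distrib_left algebra_simps)
  finally show ?thesis using wpayoff_self[OF x] by simp
qed

lemma wpayoff_logit_flow:
  assumes x: "in_simplices n m x"
  shows "wpayoff (\<lambda>i s. f i s x) (\<lambda>i s. g * (f i s x - x i s) + p i s)
    = - g * wpayoff (\<lambda>i s. f i s x) x + wpayoff (\<lambda>i s. f i s x) p"
proof -
  let ?F = "\<lambda>i s. f i s x"
  have "wpayoff ?F (\<lambda>i s. g * (f i s x - x i s) + p i s)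
    = g * (wpayoff ?F ?F - wpayoff ?F x) + wpayoff ?F p"
    using wpayoff_linear_right[of ?F g "\<lambda>i s. f i s x - x i s" 1 p]
      by (simp add: wpayoff_diff_right)
  then show ?thesis using wpayoff_self[OF in_simplices_logit] by simp
qed

lemma lyap_dir_flow:
  assumes x: "in_simplices n m x"
  shows "lyap_dir x (\<lambda>i s. g * (f i s x - x i s) + p i s) = - g * dissipation x
    + (\<beta> * wpayoff (\<lambda>i s. f i s x) p + (\<Sum>i<n. \<omega> i * (\<Sum>s<m i. p i s * (ln (x i s) + 1))))"
proof -
  let ?F = "\<lambda>i s. f i s x"
  have log_part: "(\<Sum>s<m i. (g * (f i s x - x i s) + p i s) * (ln (x i s) + 1)) =
      g * (\<Sum>s<m i. (f i s x - x i s) * ln (x i s)) + (\<Sum>s<m i. p i s * (ln (x i s) + 1))"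
    if i: "i < n" for i
  proof -
    have "(\<Sum>s<m i. (g * (f i s x - x i s) + p i s) * (ln (x i s) + 1)) =
      g * (\<Sum>s<m i. (f i s x - x i s) * ln (x i s)) + g * ((\<Sum>s<m i. f i s x) - (\<Sum>s<m i. x i s))
      + (\<Sum>s<m i. p i s * (ln (x i s) + 1))"
      by (simp add: sum.distrib sum_subtractf sum_distrib_left algebra_simps)
    then show ?thesis using sum_logit[OF i] x i by (simp add: in_simplices_def)
  qed
  have "lyap_dir x (\<lambda>i s. g * (f i s x - x i s) + p i s) =
     \<beta> * wpayoff ?F (\<lambda>i s. g * (f i s x - x i s) + p i s)
     + (\<Sum>i<n. \<omega> i * (\<Sum>s<m i. (g * (f i s x - x i s) + p i s) * (ln (x i s) + 1)))"
    unfolding lyap_dir_def wpayoff_def by (simp add: sum.distrib sum_distrib_left algebra_simps)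
  also have "\<dots> = \<beta> * (- g * wpayoff ?F x + wpayoff ?F p)
      + g * (\<Sum>i<n. \<omega> i * (\<Sum>s<m i. (f i s x - x i s) * ln (x i s)))
      + (\<Sum>i<n. \<omega> i * (\<Sum>s<m i. p i s * (ln (x i s) + 1)))"
    unfolding wpayoff_logit_flow[OF x]
      using log_part by (simp add: sum.distrib sum_distrib_left algebra_simps)
  finally have flow: "lyap_dir x (\<lambda>i s. g * (f i s x - x i s) + p i s)
    = \<beta> * (- g * wpayoff ?F x + wpayoff ?F p)
      + g * (\<Sum>i<n. \<omega> i * (\<Sum>s<m i. (f i s x - x i s) * ln (x i s)))
      + (\<Sum>i<n. \<omega> i * (\<Sum>s<m i. p i s * (ln (x i s) + 1)))" .
  have dissipation: "dissipation x
      = \<beta> * wpayoff ?F x - (\<Sum>i<n. \<omega> i * (\<Sum>s<m i. (f i s x - x i s) * ln (x i s)))"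
    unfolding dissipation_def weighted_gap_mult_ln_logit[OF x, symmetric]
    by (simp add: sum_subtractf sum.distrib sum_distrib_left algebra_simps)
  show ?thesis unfolding flow dissipation by (simp add: algebra_simps)
qed

lemma term_le_weighted_sum:
  assumes h: "\<And>i s. i < n \<Longrightarrow> s < m i \<Longrightarrow> 0 \<le> h i s" and i: "i < n" "s < m i"
  shows "\<omega> i * h i s \<le> (\<Sum>i<n. \<omega> i * (\<Sum>s<m i. h i s))"
proof -
  have "h i s \<le> (\<Sum>s<m i. h i s)" using h i by (intro member_le_sum) auto
  then have "\<omega> i * h i s \<le> \<omega> i * (\<Sum>s<m i. h i s)"
    using weight_pos[OF i(1)] by (intro mult_left_mono) auto
  also have "\<dots> \<le> (\<Sum>i<n. \<omega> i * (\<Sum>s<m i. h i s))"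
  proof -
    have nn: "0 \<le> \<omega> j * (\<Sum>s<m j. h j s)" if "j < n" for j
      using weight_pos[OF that] h[OF that] by (intro mult_nonneg_nonneg sum_nonneg) auto
    show ?thesis using i nn by (intro member_le_sum[where f = "\<lambda>i. \<omega> i * (\<Sum>s<m i. h i s)"]) auto
  qed
  finally show ?thesis .
qed

lemma weight_nonneg: "i < n \<Longrightarrow> 0 \<le> \<omega> i"
  using weight_pos less_imp_le by blast

lemma weighted_sum_nonneg: "(\<And>i. i < n \<Longrightarrow> 0 \<le> h i) \<Longrightarrow> 0 \<le> (\<Sum>i<n. \<omega> i * h i)"
  by (intro sum_nonneg mult_nonneg_nonneg) (auto simp: weight_nonneg)

definition strictly_pos :: "(nat \<Rightarrow> nat \<Rightarrow> real) \<Rightarrow> bool" where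
  "strictly_pos x \<longleftrightarrow> (\<forall>i<n. \<forall>s<m i. x i s > 0)"

lemma in_simplices_le_1: "in_simplices n m x \<Longrightarrow> i < n \<Longrightarrow> s < m i \<Longrightarrow> x i s \<le> 1"
proof -
  assume a: "in_simplices n m x" "i < n" "s < m i"
  have "x i s \<le> (\<Sum>s<m i. x i s)" using a by (intro member_le_sum) (auto simp: in_simplices_def)
  then show ?thesis using a by (simp add: in_simplices_def)
qed

definition kl_div :: "nat \<Rightarrow> (nat \<Rightarrow> nat \<Rightarrow> real) \<Rightarrow> real" where
  "kl_div i x = (\<Sum>s<m i. x i s * (ln (x i s) - ln (f i s x)))"

lemma hellinger_le_kl_div:
  assumes x: "in_simplices n m x" "strictly_pos x" and i: "i < n"
  shows "(\<Sum>s<m i. (sqrt (x i s) - sqrt (f i s x))^2) \<le> kl_div i x"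
proof -
  have "(\<Sum>s<m i. x i s - f i s x + (sqrt (x i s) - sqrt (f i s x))^2) \<le> kl_div i x"
    unfolding kl_div_def using x i logit_pos[OF i]
      by (intro sum_mono kl_term_ge_hellinger_term) (auto simp: strictly_pos_def)
  moreover have "(\<Sum>s<m i. x i s - f i s x + (sqrt (x i s) - sqrt (f i s x))^2)
     = ((\<Sum>s<m i. x i s) - (\<Sum>s<m i. f i s x)) + (\<Sum>s<m i. (sqrt (x i s) - sqrt (f i s x))^2)"
    by (simp add: sum.distrib sum_subtractf)
  ultimately show ?thesis using x i sum_logit[OF i] by (simp add: in_simplices_def)
qed

lemma gap_sq_le_kl_div:
  assumes x: "in_simplices n m x" "strictly_pos x" and i: "i < n" "s < m i"
  shows "(x i s - f i s x)^2 / 4 \<le> kl_div i x"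
proof -
  have "(x i s - f i s x)^2 \<le> 4 * (sqrt (x i s) - sqrt (f i s x))^2"
    using x i logit_pos[OF i(1)] logit_le_1[OF i] in_simplices_le_1[OF x(1) i]
    by (intro diff_sq_le_sqrt_diff_sq) (auto simp: strictly_pos_def less_imp_le)
  moreover have "(sqrt (x i s) - sqrt (f i s x))^2 \<le> (\<Sum>s<m i. (sqrt (x i s) - sqrt (f i s x))^2)"
    using i by (intro member_le_sum) auto
  ultimately show ?thesis using hellinger_le_kl_div[OF x i(1)] by simp
qed

lemma kl_div_nonneg:
  assumes x: "in_simplices n m x" "strictly_pos x" and i: "i < n"
  shows "0 \<le> kl_div i x"
  using hellinger_le_kl_div[OF x i] by (smt (verit) sum_nonneg zero_le_power2)

lemma lyap_eq_weighted_kl: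
  assumes x: "in_simplices n m x"
  shows "lyap x = (\<Sum>i<n. \<omega> i * kl_div i x)"
proof -
  have "kl_div i x = (\<Sum>s<m i. x i s * ln (x i s)) - \<beta> * (\<Sum>s<m i. x i s * util i s x)
    + ln (logit_denom i x)"
    if i: "i < n" for i
  proof -
    have "kl_div i x = (\<Sum>s<m i. x i s * ln (x i s) - \<beta> * (x i s * util i s x)
      + ln (logit_denom i x) * x i s)"
      unfolding kl_div_def by (intro sum.cong refl) (simp add: ln_logit[OF i] algebra_simps)
    also have "\<dots> = (\<Sum>s<m i. x i s * ln (x i s)) - \<beta> * (\<Sum>s<m i. x i s * util i s x)
      + ln (logit_denom i x) * (\<Sum>s<m i. x i s)"
      by (simp add: sum.distrib sum_subtractf sum_distrib_left)
    finally show ?thesis using x i by (simp add: in_simplices_def)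
  qed
  then have "(\<Sum>i<n. \<omega> i * kl_div i x) =
     (\<Sum>i<n. \<omega> i * ((\<Sum>s<m i. x i s * ln (x i s)) - \<beta> * (\<Sum>s<m i. x i s * util i s x)
       + ln (logit_denom i x)))"
    by simp
  also have "\<dots> = lyap x - \<beta> * wpayoff x x"
    unfolding lyap_def wpayoff_def
      by (simp add: sum.distrib sum_subtractf sum_distrib_left algebra_simps)
  finally show ?thesis using wpayoff_self[OF x] by simp
qed

lemma lyap_nonneg: "in_simplices n m x \<Longrightarrow> strictly_pos x \<Longrightarrow> 0 \<le> lyap x"
proof -
  assume x: "in_simplices n m x" "strictly_pos x"
  show ?thesis unfolding lyap_eq_weighted_kl[OF x(1)]
    by (rule weighted_sum_nonneg) (rule kl_div_nonneg[OF x])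
qed

lemma abs_gap_le_lyap:
  assumes x: "in_simplices n m x" "strictly_pos x" and i: "i < n" "s < m i"
  shows "\<bar>x i s - f i s x\<bar> \<le> 2 * sqrt (lyap x / \<omega> i)"
proof -
  have "\<omega> i * ((x i s - f i s x)^2 / 4) \<le> \<omega> i * kl_div i x"
    using gap_sq_le_kl_div[OF x i] weight_pos[OF i(1)] by (intro mult_left_mono) auto
  also have "\<dots> \<le> (\<Sum>i<n. \<omega> i * kl_div i x)"
    using i by (intro member_le_sum[where f = "\<lambda>i. \<omega> i * kl_div i x"])
      (auto intro!: mult_nonneg_nonneg simp: weight_nonneg kl_div_nonneg[OF x])
  finally have "\<bar>x i s - f i s x\<bar>\<^sup>2 \<le> 2\<^sup>2 * (lyap x / \<omega> i)"
    using lyap_eq_weighted_kl[OF x(1)] weight_pos[OF i(1)] by (simp add: field_simps)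
  then have "\<bar>x i s - f i s x\<bar> \<le> sqrt (2\<^sup>2 * (lyap x / \<omega> i))"
    by (rule real_le_rsqrt)
  then show ?thesis unfolding real_sqrt_mult by simp
qed

lemma lyap_le_dissipation:
  assumes x: "in_simplices n m x" "strictly_pos x"
  shows "lyap x \<le> dissipation x"
proof -
  have "dissipation x - (\<Sum>i<n. \<omega> i * kl_div i x)
    = (\<Sum>i<n. \<omega> i * (\<Sum>s<m i. f i s x * (ln (f i s x) - ln (x i s))))"
  proof -
    have "dissipation x - (\<Sum>i<n. \<omega> i * kl_div i x)
      = (\<Sum>i<n. \<omega> i * ((\<Sum>s<m i. (f i s x - x i s) * (ln (f i s x) - ln (x i s))) - kl_div i x))"
      unfolding dissipation_def by (simp only: right_diff_distrib sum_subtractf)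
    also have "\<dots> = (\<Sum>i<n. \<omega> i * (\<Sum>s<m i. f i s x * (ln (f i s x) - ln (x i s))))"
      unfolding kl_div_def by (intro sum.cong refl arg_cong2[where f="(*)"])
        (simp add: sum_subtractf[symmetric] algebra_simps)
    finally show ?thesis .
  qed
  moreover have "0 \<le> (\<Sum>s<m i. f i s x * (ln (f i s x) - ln (x i s)))" if i: "i < n" for i
  proof -
    have "(\<Sum>s<m i. f i s x - x i s + (sqrt (f i s x) - sqrt (x i s))^2)
      \<le> (\<Sum>s<m i. f i s x * (ln (f i s x) - ln (x i s)))"
      using x i logit_pos[OF i] by (intro sum_mono kl_term_ge_hellinger_term)
        (auto simp: strictly_pos_def)
    moreover have "(\<Sum>s<m i. f i s x - x i s + (sqrt (f i s x) - sqrt (x i s))^2)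
      = ((\<Sum>s<m i. f i s x) - (\<Sum>s<m i. x i s)) + (\<Sum>s<m i. (sqrt (f i s x) - sqrt (x i s))^2)"
      by (simp add: sum.distrib sum_subtractf)
    moreover have "0 \<le> (\<Sum>s<m i. (sqrt (f i s x) - sqrt (x i s))^2)" by (intro sum_nonneg) auto
    ultimately show ?thesis using x i sum_logit[OF i] by (simp add: in_simplices_def)
  qed
  ultimately have "0 \<le> dissipation x - (\<Sum>i<n. \<omega> i * kl_div i x)"
    by (simp add: weighted_sum_nonneg)
  then show ?thesis using lyap_eq_weighted_kl[OF x(1)] by simp
qed

lemma weighted_ln_logit_orthogonal:
  assumes x: "in_simplices n m x" and xs: "in_simplices n m xs"
    and fx: "\<And>i s. i < n \<Longrightarrow> s < m i \<Longrightarrow> xs i s = f i s xs"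
  shows "(\<Sum>i<n. \<omega> i * (\<Sum>s<m i. (x i s - xs i s) * (ln (f i s x) - ln (xs i s)))) = 0"
proof -
  have "(\<Sum>s<m i. (x i s - xs i s) * (ln (f i s x) - ln (xs i s))) =
        \<beta> * (\<Sum>s<m i. (x i s - xs i s) * (util i s x - util i s xs))" if i: "i < n" for i
  proof -
    have "(\<Sum>s<m i. (x i s - xs i s) * (ln (f i s x) - ln (xs i s))) =
      (\<Sum>s<m i. \<beta> * ((x i s - xs i s) * (util i s x - util i s xs))
        - (ln (logit_denom i x) - ln (logit_denom i xs)) * (x i s - xs i s))"
      by (intro sum.cong refl) (simp add: fx[OF i] ln_logit[OF i] algebra_simps)
    also have "\<dots> = \<beta> * (\<Sum>s<m i. (x i s - xs i s) * (util i s x - util i s xs))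
        - (ln (logit_denom i x) - ln (logit_denom i xs)) * ((\<Sum>s<m i. x i s) - (\<Sum>s<m i. xs i s))"
      by (simp only: sum_subtractf sum_distrib_left right_diff_distrib)
    finally show ?thesis using x xs i by (simp add: in_simplices_def)
  qed
  then have "(\<Sum>i<n. \<omega> i * (\<Sum>s<m i. (x i s - xs i s) * (ln (f i s x) - ln (xs i s)))) =
     \<beta> * (\<Sum>i<n. \<omega> i * (\<Sum>s<m i. (x i s - xs i s) * (util i s x - util i s xs)))"
    by (simp add: sum_distrib_left algebra_simps)
  also have "(\<Sum>i<n. \<omega> i * (\<Sum>s<m i. (x i s - xs i s) * (util i s x - util i s xs))) =
     wpayoff x x - wpayoff x xs - (wpayoff xs x - wpayoff xs xs)"
    unfolding wpayoff_def by (simp add: sum_subtractf sum.distrib sum_distrib_left algebra_simps)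
  finally show ?thesis using wpayoff_self[OF x] wpayoff_self[OF xs] wpayoff_antisym[OF x xs] by simp
qed

text \<open>By orthogonality at the fixed point, the monotonicity of ln bounds the distance to it by the
  logit gap of x.\<close>
lemma dist_to_fixed_point_le:
  assumes x: "in_simplices n m x" "strictly_pos x" and xs: "in_simplices n m xs" "strictly_pos xs"
    and fx: "\<And>i s. i < n \<Longrightarrow> s < m i \<Longrightarrow> xs i s = f i s xs"
    and d: "d > 0" "\<And>i s. i < n \<Longrightarrow> s < m i \<Longrightarrow> d \<le> x i s" "\<And>i s. i < n \<Longrightarrow> s < m i \<Longrightarrow> d \<le> f i s x"
    and i: "i < n" "s < m i"
  shows "\<omega> i * (x i s - xs i s)^2 \<le> (\<Sum>i<n. \<omega> i * (\<Sum>s<m i. \<bar>x i s - f i s x\<bar>)) / d"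
proof -
  have "\<omega> i * (x i s - xs i s)^2 \<le> (\<Sum>i<n. \<omega> i * (\<Sum>s<m i. (x i s - xs i s)^2))"
    using i by (intro term_le_weighted_sum) auto
  also have "\<dots> \<le> (\<Sum>i<n. \<omega> i * (\<Sum>s<m i. (x i s - xs i s) * (ln (x i s) - ln (xs i s))))"
    using weight_pos x xs in_simplices_le_1[OF x(1)] in_simplices_le_1[OF xs(1)]
    by (intro sum_mono mult_left_mono diff_sq_le_diff_mult_ln_diff)
      (auto simp: strictly_pos_def less_imp_le)
  also have "\<dots> = (\<Sum>i<n. \<omega> i * (\<Sum>s<m i. (x i s - xs i s) * (ln (x i s) - ln (f i s x))))
     + (\<Sum>i<n. \<omega> i * (\<Sum>s<m i. (x i s - xs i s) * (ln (f i s x) - ln (xs i s))))"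
  proof -
    have "(\<Sum>i<n. \<omega> i * (\<Sum>s<m i. (x i s - xs i s) * (ln (x i s) - ln (xs i s)))) =
      (\<Sum>i<n. \<omega> i * (\<Sum>s<m i. (x i s - xs i s) * (ln (x i s) - ln (f i s x))
        + (x i s - xs i s) * (ln (f i s x) - ln (xs i s))))"
      by (intro sum.cong refl arg_cong2[where f="(*)"]) (simp add: algebra_simps)
    then show ?thesis by (simp only: sum.distrib distrib_left)
  qed
  also have "\<dots> = (\<Sum>i<n. \<omega> i * (\<Sum>s<m i. (x i s - xs i s) * (ln (x i s) - ln (f i s x))))"
    using weighted_ln_logit_orthogonal[OF x(1) xs(1) fx] by simp
  also have "\<dots> \<le> (\<Sum>i<n. \<omega> i * (\<Sum>s<m i. \<bar>x i s - f i s x\<bar> / d))"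
  proof (intro sum_mono mult_left_mono)
    fix i s assume i: "i \<in> {..<n}" "s \<in> {..<m i}"
    have "0 < x i s" "0 < xs i s" using x(2) xs(2) i by (auto simp: strictly_pos_def)
    moreover have "x i s \<le> 1" "xs i s \<le> 1"
      using in_simplices_le_1[OF x(1)] in_simplices_le_1[OF xs(1)] i by auto
    ultimately have "\<bar>x i s - xs i s\<bar> \<le> 1" by (simp add: abs_le_iff)
    moreover have "\<bar>ln (x i s) - ln (f i s x)\<bar> \<le> \<bar>x i s - f i s x\<bar> / d"
      using d i by (intro abs_ln_diff_le) auto
    ultimately have "\<bar>(x i s - xs i s) * (ln (x i s) - ln (f i s x))\<bar> \<le> 1 * (\<bar>x i s - f i s x\<bar> / d)"
      unfolding abs_mult by (intro mult_mono) auto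
    then show "(x i s - xs i s) * (ln (x i s) - ln (f i s x)) \<le> \<bar>x i s - f i s x\<bar> / d" by simp
  next
    fix i assume "i \<in> {..<n}" then show "0 \<le> \<omega> i" using weight_pos by (auto intro: less_imp_le)
  qed
  also have "\<dots> = (\<Sum>i<n. \<omega> i * (\<Sum>s<m i. \<bar>x i s - f i s x\<bar>)) / d"
    by (simp add: sum_divide_distrib[symmetric] sum_distrib_left)
  finally show ?thesis .
qed

lemma util_upd_comp:
  assumes j: "j \<in> N i" and s': "s' < m j"
  shows "util i s (upd_comp mu j s' w) = util i s mu + A i j s s' * (w - mu j s')"
proof -
  have e: "upd_comp mu j s' w j' s''
    = mu j' s'' + (if j' = j \<and> s'' = s' then w - mu j s' else 0)" for j' s''
    by (simp add: upd_comp_def)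
  have "util i s (upd_comp mu j s' w) = util i s mu +
      (\<Sum>j'\<in>N i. \<Sum>s''<m j'. (if j' = j \<and> s'' = s' then A i j' s s'' * (w - mu j s') else 0))"
    unfolding util_def e by (simp add: distrib_left sum.distrib
      if_distrib[where f="\<lambda>x. A _ _ _ _ * x"] cong: if_cong)
  also have "(\<Sum>j'\<in>N i. \<Sum>s''<m j'. (if j' = j \<and> s'' = s' then A i j' s s'' * (w - mu j s') else 0))
     = (\<Sum>j'\<in>N i. (if j' = j then A i j s s' * (w - mu j s') else 0))"
    using s' by (intro sum.cong refl) auto
  also have "\<dots> = A i j s s' * (w - mu j s')" using j by simp
  finally show ?thesis .
qed

lemma logit_upd_comp:
  assumes "i < n" "j \<in> N i" and "s' < m j"
  shows "f i s (upd_comp mu j s' w) = softmax_line.prob (m i)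
    (\<lambda>k. \<beta> * A i j k s') (\<lambda>k. \<beta> * (util i k mu - A i j k s' * mu j s')) s w"
proof -
  interpret softmax_line "m i" "\<lambda>k. \<beta> * A i j k s'" "\<lambda>k. \<beta> * (util i k mu - A i j k s' * mu j s')"
    using m_pos assms by unfold_locales
  show ?thesis
    unfolding prob_def denom_def
    using assms by (simp add: logit_eq logit_denom_def util_upd_comp algebra_simps)
qed

lemma partial2_logit_eq:
  assumes i: "i < n" and j: "j \<in> N i" and s': "s' < m j"
  shows "partial2 (logit n m E A \<beta> i s) mu j s' = softmax_line.d2 (m i)
    (\<lambda>k. \<beta> * A i j k s') (\<lambda>k. \<beta> * (util i k mu - A i j k s' * mu j s')) s (mu j s')"
proof -
  interpret softmax_line "m i" "\<lambda>k. \<beta> * A i j k s'" "\<lambda>k. \<beta> * (util i k mu - A i j k s' * mu j s')"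
    using m_pos[OF i] by unfold_locales
  have "(\<lambda>z. deriv (\<lambda>w. f i s (upd_comp mu j s' w)) z) = d1 s"
    using DERIV_imp_deriv[OF prob_has_derivative]
      by (simp add: logit_upd_comp[OF i j s'] fun_eq_iff)
  then show ?thesis
    unfolding partial2_def using DERIV_imp_deriv[OF d1_has_derivative] by simp
qed

definition payoff_bound :: real where
  "payoff_bound = (\<Sum>i<n. \<Sum>j<n. \<Sum>k<m i. \<Sum>s'<m j. \<bar>A i j k s'\<bar>)"

lemma abs_A_le_payoff_bound:
  assumes "i < n" "j < n" "k < m i" "s' < m j"
  shows "\<bar>A i j k s'\<bar> \<le> payoff_bound"
proof -
  have "\<bar>A i j k s'\<bar> \<le> (\<Sum>s'<m j. \<bar>A i j k s'\<bar>)" using assms by (intro member_le_sum) auto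
  also have "\<dots> \<le> (\<Sum>k<m i. \<Sum>s'<m j. \<bar>A i j k s'\<bar>)"
    using assms by (intro member_le_sum[where f="\<lambda>k. \<Sum>s'<m j. \<bar>A i j k s'\<bar>"])
      (auto intro: sum_nonneg)
  also have "\<dots> \<le> (\<Sum>j<n. \<Sum>k<m i. \<Sum>s'<m j. \<bar>A i j k s'\<bar>)"
    using assms by (intro member_le_sum[where f="\<lambda>j. \<Sum>k<m i. \<Sum>s'<m j. \<bar>A i j k s'\<bar>"])
      (auto intro: sum_nonneg)
  also have "\<dots> \<le> payoff_bound"
    unfolding payoff_bound_def
    using assms by (intro member_le_sum[where f="\<lambda>i. \<Sum>j<n. \<Sum>k<m i. \<Sum>s'<m j. \<bar>A i j k s'\<bar>"])
      (auto intro: sum_nonneg)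
  finally show ?thesis .
qed

lemma payoff_bound_nonneg: "0 \<le> payoff_bound"
  unfolding payoff_bound_def by (intro sum_nonneg) auto

lemma abs_partial2_logit_le:
  assumes i: "i < n" and j: "j \<in> N i" and s': "s' < m j" and s: "s < m i"
  shows "\<bar>partial2 (logit n m E A \<beta> i s) mu j s'\<bar> \<le> 6 * (\<beta> * payoff_bound)^2"
  unfolding partial2_logit_eq[OF i j s']
proof (rule softmax_line.abs_d2_le)
  show "softmax_line (m i)" using m_pos[OF i] by unfold_locales
  fix k assume k: "k < m i"
  show "\<bar>\<beta> * A i j k s'\<bar> \<le> \<beta> * payoff_bound"
    unfolding abs_mult abs_of_pos[OF beta_pos]
    using beta_pos abs_A_le_payoff_bound[OF i nbrs_less[OF j] k s'] by (intro mult_left_mono) auto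
qed (rule s)

lemma sum_partial2_logit:
  assumes i: "i < n" and j: "j \<in> N i" and s': "s' < m j"
  shows "(\<Sum>s<m i. partial2 (logit n m E A \<beta> i s) mu j s') = 0"
  unfolding partial2_logit_eq[OF i j s']
  by (rule softmax_line.sum_d2) (use m_pos[OF i] in unfold_locales)

lemma abs_util_le:
  assumes "\<And>j s'. j < n \<Longrightarrow> s' < m j \<Longrightarrow> \<bar>x j s'\<bar> \<le> R" and i: "i < n" and s: "s < m i"
  shows "\<bar>util i s x\<bar> \<le> R * payoff_bound"
proof -
  have R: "0 \<le> R" if "j < n" "s' < m j" for j s' using assms(1)[OF that] by linarith
  have "\<bar>util i s x\<bar> \<le> (\<Sum>j\<in>N i. \<Sum>s'<m j. \<bar>A i j s s'\<bar> * R)"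
    unfolding util_def
    by (rule order_trans[OF sum_abs], intro sum_mono, rule order_trans[OF sum_abs], intro sum_mono)
       (auto simp: abs_mult intro!: mult_left_mono assms(1) dest: nbrs_less)
  also have "\<dots> \<le> (\<Sum>j<n. \<Sum>s'<m j. \<bar>A i j s s'\<bar> * R)"
    using nbrs_subset R by (intro sum_mono2) (auto intro!: sum_nonneg mult_nonneg_nonneg)
  also have "\<dots> = R * (\<Sum>j<n. \<Sum>s'<m j. \<bar>A i j s s'\<bar>)"
    by (simp add: sum_distrib_left sum_distrib_right mult.commute)
  also have "\<dots> \<le> R * payoff_bound"
  proof (cases "\<exists>j<n. 0 < m j")
    case True
    then obtain j0 s0 where "j0 < n" "s0 < m j0" by auto
    then have R0: "0 \<le> R" using R by auto
    have "(\<Sum>j<n. \<Sum>s'<m j. \<bar>A i j s s'\<bar>) \<le> (\<Sum>k<m i. \<Sum>j<n. \<Sum>s'<m j. \<bar>A i j k s'\<bar>)"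
      using s by (intro member_le_sum[where f = "\<lambda>k. \<Sum>j<n. \<Sum>s'<m j. \<bar>A i j k s'\<bar>"])
        (auto intro: sum_nonneg)
    also have "\<dots> = (\<Sum>j<n. \<Sum>k<m i. \<Sum>s'<m j. \<bar>A i j k s'\<bar>)" by (rule sum.swap)
    also have "\<dots> \<le> payoff_bound" unfolding payoff_bound_def
      using i by (intro member_le_sum[where f = "\<lambda>i. \<Sum>j<n. \<Sum>k<m i. \<Sum>s'<m j. \<bar>A i j k s'\<bar>"])
        (auto intro: sum_nonneg)
    finally show ?thesis using R0 by (intro mult_left_mono)
  next
    case False
    then have "(\<Sum>j<n. \<Sum>s'<m j. \<bar>A i j s s'\<bar>) = 0" by (intro sum.neutral) auto
    then show ?thesis using i s False by auto
  qed
  finally show ?thesis .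
qed

lemma logit_lower_bound:
  assumes "\<And>j s'. j < n \<Longrightarrow> s' < m j \<Longrightarrow> \<bar>x j s'\<bar> \<le> R" and i: "i < n" and s: "s < m i"
  shows "exp (- 2 * \<beta> * R * payoff_bound) / m i \<le> f i s x"
proof -
  have ub: "\<bar>util i k x\<bar> \<le> R * payoff_bound" if "k < m i" for k
    using abs_util_le[OF assms(1) i that] .
  have num: "exp (- (\<beta> * R * payoff_bound)) \<le> exp (\<beta> * util i s x)"
  proof -
    have "- (R * payoff_bound) \<le> util i s x" using ub[OF s] by (simp add: abs_le_iff)
    then have "\<beta> * (- (R * payoff_bound)) \<le> \<beta> * util i s x"
      using beta_pos by (intro mult_left_mono) auto
    then show ?thesis by (simp add: mult.assoc)
  qed
  have "logit_denom i x \<le> (\<Sum>k<m i. exp (\<beta> * R * payoff_bound))"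
    unfolding logit_denom_def
  proof (intro sum_mono)
    fix k assume "k \<in> {..<m i}"
    then have "\<beta> * util i k x \<le> \<beta> * (R * payoff_bound)"
      using ub beta_pos by (intro mult_left_mono) (auto simp: abs_le_iff)
    then show "exp (\<beta> * util i k x) \<le> exp (\<beta> * R * payoff_bound)" by (simp add: mult.assoc)
  qed
  then have Zb: "logit_denom i x \<le> m i * exp (\<beta> * R * payoff_bound)" by simp
  have "exp (- 2 * \<beta> * R * payoff_bound) / m i
    = exp (- (\<beta> * R * payoff_bound)) / (m i * exp (\<beta> * R * payoff_bound))"
    by (simp add: exp_minus field_simps exp_add[symmetric])
  also have "\<dots> \<le> exp (\<beta> * util i s x) / logit_denom i x"
    using num Zb logit_denom_pos[OF i, of x] by (intro frac_le) auto
  finally show ?thesis by (simp add: logit_eq)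
qed

definition trim_level :: real where
  "trim_level = exp (- 2 * \<beta> * payoff_bound) / (real (\<Sum>i<n. m i) + 1)"

lemma trim_level_pos: "trim_level > 0"
proof -
  have "0 \<le> real (\<Sum>i<n. m i)" by (rule of_nat_0_le_iff)
  then have "0 < real (\<Sum>i<n. m i) + 1" by linarith
  then show ?thesis unfolding trim_level_def by (intro divide_pos_pos) simp_all
qed

lemma trim_level_le_uniform: assumes i: "i < n" shows "trim_level \<le> 1 / m i"
proof -
  have "m i \<le> (\<Sum>i<n. m i)" using i by (intro member_le_sum) auto
  then have "real (m i) \<le> real (\<Sum>i<n. m i) + 1" by linarith
  moreover have "exp (- 2 * \<beta> * payoff_bound) \<le> 1"
    using beta_pos payoff_bound_nonneg by (simp add: mult_nonneg_nonneg)
  ultimately show ?thesis unfolding trim_level_def using m_pos[OF i]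
    by (intro frac_le) auto
qed

lemma trim_level_le_logit:
  assumes "\<And>j s'. j < n \<Longrightarrow> s' < m j \<Longrightarrow> \<bar>x j s'\<bar> \<le> 1" and i: "i < n" and s: "s < m i"
  shows "trim_level \<le> f i s x"
proof -
  have "m i \<le> (\<Sum>i<n. m i)" using i by (intro member_le_sum) auto
  then have "real (m i) \<le> real (\<Sum>i<n. m i) + 1" by linarith
  then have "trim_level \<le> exp (- 2 * \<beta> * payoff_bound) / m i"
    unfolding trim_level_def using m_pos[OF i] by (intro divide_left_mono) auto
  then have "trim_level \<le> exp (- 2 * \<beta> * 1 * payoff_bound) / m i" by simp
  also have "\<dots> \<le> f i s x" by (rule logit_lower_bound[OF assms])
  finally show ?thesis .
qed

definition trimmed :: "(nat \<Rightarrow> nat \<Rightarrow> real) set" where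
  "trimmed = {x. in_simplices n m x \<and> (\<forall>i<n. \<forall>s<m i. trim_level \<le> x i s)}"

lemma trimmed_strictly_pos: "x \<in> trimmed \<Longrightarrow> strictly_pos x"
  unfolding trimmed_def strictly_pos_def using trim_level_pos by force

lemma trimmed_abs_le_1: "x \<in> trimmed \<Longrightarrow> j < n \<Longrightarrow> s' < m j \<Longrightarrow> \<bar>x j s'\<bar> \<le> 1"
  using in_simplices_le_1[of x] trimmed_strictly_pos[of x] unfolding trimmed_def strictly_pos_def
    by force

lemma logit_in_trimmed: assumes x: "x \<in> trimmed" shows "(\<lambda>i s. f i s x) \<in> trimmed"
proof -
  have "trim_level \<le> f i s x" if "i < n" "s < m i" for i s
    using trim_level_le_logit[OF trimmed_abs_le_1[OF x] that] by simp
  then show ?thesis unfolding trimmed_def using in_simplices_logit by auto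
qed

lemma trimmed_convex: assumes "x \<in> trimmed" "y \<in> trimmed" "0 \<le> e" "e \<le> 1"
  shows "(\<lambda>i s. x i s + e * (y i s - x i s)) \<in> trimmed"
proof -
  have a: "x i s + e * (y i s - x i s) = (1 - e) * x i s + e * y i s" for i s
    by (simp add: algebra_simps)
  have "trim_level \<le> (1 - e) * x i s + e * y i s" if "i < n" "s < m i" for i s
  proof -
    have "(1 - e) * trim_level + e * trim_level \<le> (1 - e) * x i s + e * y i s"
      using assms that unfolding trimmed_def by (intro add_mono mult_left_mono) auto
    then show ?thesis by (simp add: algebra_simps)
  qed
  moreover have "(\<Sum>s<m i. (1 - e) * x i s + e * y i s) = 1" if "i < n" for i
    using assms that unfolding trimmed_def in_simplices_def
      by (simp add: sum.distrib sum_distrib_left[symmetric])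
  ultimately show ?thesis unfolding a trimmed_def in_simplices_def
    using trim_level_pos by (auto intro: order_trans[OF less_imp_le])
qed

lemma uniform_in_trimmed: "(\<lambda>i s. 1 / real (m i)) \<in> trimmed"
proof -
  have "(\<Sum>s<m i. 1 / real (m i)) = 1" if "i < n" for i using m_pos[OF that] by simp
  then show ?thesis unfolding trimmed_def in_simplices_def using trim_level_le_uniform by auto
qed

lemma tendsto_lyap:
  assumes lim: "\<And>i s. i < n \<Longrightarrow> s < m i \<Longrightarrow> ((\<lambda>k. Y k i s) \<longlongrightarrow> y i s) F" and y: "strictly_pos y"
  shows "((\<lambda>k. lyap (Y k)) \<longlongrightarrow> lyap y) F"
proof -
  have ut: "((\<lambda>k. util i s (Y k)) \<longlongrightarrow> util i s y) F" for i s
    unfolding util_def by (intro tendsto_intros lim) (auto dest: nbrs_less)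
  have zt: "((\<lambda>k. logit_denom i (Y k)) \<longlongrightarrow> logit_denom i y) F" for i
    unfolding logit_denom_def by (intro tendsto_intros ut)
  show ?thesis
    unfolding lyap_def
    using y logit_denom_pos by (intro tendsto_intros zt lim)
      (auto simp: strictly_pos_def intro!: less_imp_neq[symmetric])
qed

lemma gap_sq_le_dissipation:
  assumes x: "x \<in> trimmed" and i: "i < n" "s < m i"
  shows "\<omega> i * (f i s x - x i s)^2 \<le> dissipation x"
proof -
  have "\<omega> i * (f i s x - x i s)^2 \<le> (\<Sum>i<n. \<omega> i * (\<Sum>s<m i. (f i s x - x i s)^2))"
    using i by (intro term_le_weighted_sum) auto
  also have "\<dots> \<le> dissipation x"
    unfolding dissipation_def
    using x trimmed_strictly_pos[OF x] logit_pos logit_le_1 in_simplices_le_1 weight_nonneg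
    by (intro sum_mono mult_left_mono diff_sq_le_diff_mult_ln_diff)
      (auto simp: strictly_pos_def trimmed_def less_imp_le)
  finally show ?thesis .
qed

lemma trimmed_closed:
  assumes X: "\<And>k. X k \<in> trimmed"
    and lim: "\<And>i s. i < n \<Longrightarrow> s < m i \<Longrightarrow> (\<lambda>k. X k i s) \<longlonglongrightarrow> x i s"
  shows "x \<in> trimmed"
proof -
  have ge: "trim_level \<le> x i s" if "i < n" "s < m i" for i s
  proof (rule LIMSEQ_le_const[OF lim[OF that]])
    have "trim_level \<le> X k i s" for k using X[of k] that by (simp add: trimmed_def)
    then show "\<exists>N. \<forall>k\<ge>N. trim_level \<le> X k i s" by blast
  qed
  have "(\<Sum>s<m i. x i s) = 1" if "i < n" for i
  proof (rule LIMSEQ_unique)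
    show "(\<lambda>k. \<Sum>s<m i. X k i s) \<longlonglongrightarrow> (\<Sum>s<m i. x i s)"
      by (rule tendsto_sum) (use lim that in simp)
    show "(\<lambda>k. \<Sum>s<m i. X k i s) \<longlonglongrightarrow> 1"
      using X that by (simp add: trimmed_def in_simplices_def)
  qed
  moreover have "0 \<le> x i s" if "i < n" "s < m i" for i s
    using ge[OF that] trim_level_pos by linarith
  ultimately show ?thesis using ge unfolding trimmed_def in_simplices_def by blast
qed

lemma lyap_attains_min_on_trimmed: "\<exists>x\<in>trimmed. \<forall>y\<in>trimmed. lyap x \<le> lyap y"
proof -
  define v0 where "v0 = Inf (lyap ` trimmed)"
  have "0 \<le> lyap x" if "x \<in> trimmed" for x
    using lyap_nonneg[OF _ trimmed_strictly_pos[OF that]] that by (simp add: trimmed_def)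
  then have bdd: "bdd_below (lyap ` trimmed)" by (intro bdd_belowI[of _ 0]) blast
  have ne: "lyap ` trimmed \<noteq> {}" using uniform_in_trimmed by blast
  have v0_le: "v0 \<le> lyap x" if "x \<in> trimmed" for x
    unfolding v0_def using bdd that by (auto intro: cInf_lower)
  have "\<exists>x\<in>trimmed. lyap x < v0 + 1 / (real k + 1)" for k
  proof -
    have "Inf (lyap ` trimmed) < v0 + 1 / (real k + 1)" unfolding v0_def by simp
    then show ?thesis unfolding cInf_less_iff[OF ne bdd] by blast
  qed
  then have "\<forall>k. \<exists>x. x \<in> trimmed \<and> lyap x < v0 + 1 / (real k + 1)" by blast
  from choice[OF this] obtain X where "\<forall>k. X k \<in> trimmed \<and> lyap (X k) < v0 + 1 / (real k + 1)"
    by blast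
  then have X: "\<And>k. X k \<in> trimmed" "\<And>k. lyap (X k) < v0 + 1 / (real k + 1)"
    by auto
  let ?I = "Sigma {..<n} (\<lambda>i. {..<m i})"
  have "\<bar>(\<lambda>(i, s). X k i s) is\<bar> \<le> 1" if "is \<in> ?I" for "is" k
    using that trimmed_abs_le_1[OF X(1)] by auto
  then obtain r where r: "strict_mono r" "\<forall>is\<in>?I. convergent (\<lambda>k. (\<lambda>(i, s). X (r k) i s) is)"
    using bounded_imp_common_convergent_subseq[of ?I "\<lambda>k (i, s). X k i s" 1] by auto
  define x where "x = (\<lambda>i s. lim (\<lambda>k. X (r k) i s))"
  have lim: "(\<lambda>k. X (r k) i s) \<longlonglongrightarrow> x i s" if "i < n" "s < m i" for i s
  proof -
    have "convergent (\<lambda>k. X (r k) i s)" using r(2) that by auto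
    then show ?thesis unfolding x_def by (simp add: convergent_LIMSEQ_iff)
  qed
  have x: "x \<in> trimmed" by (rule trimmed_closed[OF X(1) lim])
  have "(\<lambda>k. 1 / (real k + 1)) \<longlonglongrightarrow> 0"
    using LIMSEQ_inverse_real_of_nat by (simp add: inverse_eq_divide add.commute)
  from LIMSEQ_subseq_LIMSEQ[OF this r(1)] have r_lim: "(\<lambda>k. 1 / (real (r k) + 1)) \<longlonglongrightarrow> 0"
    by (simp add: o_def)
  have upper: "(\<lambda>k. v0 + 1 / (real (r k) + 1)) \<longlonglongrightarrow> v0"
    using tendsto_add[OF tendsto_const[of v0] r_lim] by simp
  have "\<forall>\<^sub>F k in sequentially. v0 \<le> lyap (X (r k))" using X(1) v0_le by simp
  moreover have "\<forall>\<^sub>F k in sequentially. lyap (X (r k)) \<le> v0 + 1 / (real (r k) + 1)"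
    using X(2) by (simp add: less_imp_le)
  ultimately have "(\<lambda>k. lyap (X (r k))) \<longlonglongrightarrow> v0"
    using tendsto_const upper by (rule real_tendsto_sandwich)
  moreover have "(\<lambda>k. lyap (X (r k))) \<longlonglongrightarrow> lyap x"
    by (rule tendsto_lyap[OF lim trimmed_strictly_pos[OF x]])
  ultimately have "lyap x = v0" by (rule LIMSEQ_unique[rotated])
  then show ?thesis using x v0_le by auto
qed

text \<open>A minimiser cannot decrease further in the direction of the logit response, and the
  derivative of the Lyapunov function in that direction is minus the dissipation.\<close>
lemma trimmed_minimiser_is_fixed_point:
  assumes x: "x \<in> trimmed" and min: "\<And>y. y \<in> trimmed \<Longrightarrow> lyap x \<le> lyap y"
    and i: "i < n" "s < m i"
  shows "f i s x = x i s"
proof -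
  define c where "c = (\<lambda>i s. f i s x - x i s)"
  define y where "y = (\<lambda>e::real. \<lambda>i s. x i s + e * c i s)"
  have "((\<lambda>e. lyap (y e)) has_real_derivative lyap_dir (y 0) c) (at 0)"
  proof (rule lyap_has_derivative)
    fix j s' assume "j < n" "s' < m j"
    show "((\<lambda>e. y e j s') has_real_derivative c j s') (at 0)"
      unfolding y_def
      by (rule DERIV_cong[OF DERIV_add[OF DERIV_const DERIV_cmult_right[OF DERIV_ident]]]) simp
    show "0 < y 0 j s'"
      using trimmed_strictly_pos[OF x] \<open>j < n\<close> \<open>s' < m j\<close> by (simp add: y_def strictly_pos_def)
  qed
  moreover have "lyap_dir (y 0) c = - dissipation x"
    using lyap_dir_flow[of x 1 "\<lambda>_ _. 0"] x
      by (simp add: y_def c_def trimmed_def wpayoff_def util_def)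
  ultimately have deriv: "((\<lambda>e. lyap (y e)) has_real_derivative - dissipation x) (at 0)"
    by simp
  have "dissipation x \<le> 0"
  proof (rule ccontr)
    assume "\<not> dissipation x \<le> 0"
    then obtain d where d: "0 < d" "\<And>h. 0 < h \<Longrightarrow> h < d \<Longrightarrow> lyap (y (0 + h)) < lyap (y 0)"
      using DERIV_neg_dec_right[OF deriv] by auto
    define h where "h = min (d / 2) 1"
    have h: "0 < h" "h < d" "h \<le> 1" using d(1) by (auto simp: h_def)
    have "y h \<in> trimmed"
      unfolding y_def c_def using trimmed_convex[OF x logit_in_trimmed[OF x], of h] h by simp
    then have "lyap (y 0) \<le> lyap (y h)" using min by (simp add: y_def)
    then show False using d(2)[OF h(1,2)] by simp
  qed
  then have "\<omega> i * (f i s x - x i s)^2 \<le> 0" using gap_sq_le_dissipation[OF x i] by simp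
  then show ?thesis using weight_pos[OF i(1)] by (simp add: mult_le_0_iff)
qed

lemma logit_clip: "f i s (clip x) = f i s x"
  by (simp add: logit_eq logit_denom_def util_clip)

lemma QRE_exists: "\<exists>x. is_QRE n m E A \<beta> x"
proof -
  obtain x where x: "x \<in> trimmed" "\<And>y. y \<in> trimmed \<Longrightarrow> lyap x \<le> lyap y"
    using lyap_attains_min_on_trimmed by blast
  have "in_profile n m (clip x)"
    using x(1) by (intro in_profile_clip) (simp add: trimmed_def)
  moreover have "clip x i s = f i s (clip x)" if "i < n" "s < m i" for i s
  proof -
    have "clip x i s = x i s" using that by (simp add: clip_def)
    also have "\<dots> = f i s x" by (rule trimmed_minimiser_is_fixed_point[OF x that, symmetric])
    also have "\<dots> = f i s (clip x)" by (rule logit_clip[symmetric])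
    finally show ?thesis .
  qed
  ultimately show ?thesis unfolding is_QRE_def by blast
qed

lemma QRE_in_trimmed:
  assumes x: "is_QRE n m E A \<beta> x"
  shows "x \<in> trimmed"
proof -
  have simplices: "in_simplices n m x"
    using x unfolding is_QRE_def in_profile_def in_simplices_def by blast
  have fixed: "\<And>i s. i < n \<Longrightarrow> s < m i \<Longrightarrow> x i s = f i s x"
    using x unfolding is_QRE_def by blast
  have le_1: "\<bar>x j s'\<bar> \<le> 1" if "j < n" "s' < m j" for j s'
    unfolding fixed[OF that] using logit_pos[OF that(1)] logit_le_1[OF that]
      by (simp add: abs_of_pos)
  have "trim_level \<le> x i s" if "i < n" "s < m i" for i s
    unfolding fixed[OF that] by (rule trim_level_le_logit[OF le_1 that])
  then show ?thesis using simplices by (simp add: trimmed_def)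
qed

lemma QRE_unique:
  assumes x: "is_QRE n m E A \<beta> x" and y: "is_QRE n m E A \<beta> y"
  shows "x = y"
proof (rule ext, rule ext)
  fix i s
  have fixed: "\<And>i s. i < n \<Longrightarrow> s < m i \<Longrightarrow> x i s = f i s x"
    "\<And>i s. i < n \<Longrightarrow> s < m i \<Longrightarrow> y i s = f i s y"
    using x y by (auto simp: is_QRE_def)
  note trimmed = QRE_in_trimmed[OF x] QRE_in_trimmed[OF y]
  show "x i s = y i s"
  proof (cases "i < n \<and> s < m i")
    case True
    have "\<omega> i * (x i s - y i s)^2 \<le> (\<Sum>i<n. \<omega> i * (\<Sum>s<m i. \<bar>x i s - f i s x\<bar>)) / trim_level"
      by (rule dist_to_fixed_point_le[OF _ trimmed_strictly_pos _ trimmed_strictly_pos fixed(2)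
            trim_level_pos _ _ True[THEN conjunct1] True[THEN conjunct2]])
        (use trimmed fixed(1) in \<open>auto simp: trimmed_def\<close>)
    also have "\<dots> = 0" using fixed(1) by simp
    finally show ?thesis using weight_pos[of i] True by (simp add: mult_le_0_iff)
  next
    case False
    then show ?thesis using x y by (auto simp: is_QRE_def in_profile_def)
  qed
qed

end

locale belief_dynamics = zero_sum_network +
  fixes lam :: real and \<sigma>2 :: "nat \<Rightarrow> nat \<Rightarrow> real" and mu :: "real \<Rightarrow> nat \<Rightarrow> nat \<Rightarrow> real"
  assumes lam_nonneg: "0 \<le> lam"
    and variance_nonneg: "\<And>j s. j < n \<Longrightarrow> s < m j \<Longrightarrow> 0 \<le> \<sigma>2 j s"
    and solution: "mean_belief_solution n m E A \<beta> lam \<sigma>2 mu"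
    and init_simplices: "in_simplices n m (mu 0)"
begin

definition rate :: "real \<Rightarrow> real" where
  "rate t = 1 / (lam + t + 1)"

definition variance :: "real \<Rightarrow> nat \<Rightarrow> nat \<Rightarrow> real" where
  "variance t j s' = ((lam + 1) / (lam + t + 1))\<^sup>2 * \<sigma>2 j s'"

definition noise :: "real \<Rightarrow> nat \<Rightarrow> nat \<Rightarrow> real" where
  "noise t i s =
     (\<Sum>j\<in>N i. \<Sum>s'<m j. partial2 (f i s) (mu t) j s' * variance t j s') / (2 * (lam + t + 1))"

definition drift :: "real \<Rightarrow> nat \<Rightarrow> nat \<Rightarrow> real" where
  "drift t i s = rate t * (f i s (mu t) - mu t i s) + noise t i s"

lemma horizon_pos: "0 \<le> t \<Longrightarrow> 0 < lam + t + 1"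
  using lam_nonneg by linarith

lemma rate_pos: "0 \<le> t \<Longrightarrow> 0 < rate t"
  using horizon_pos by (simp add: rate_def)

lemma horizon_mult_rate: "0 \<le> t \<Longrightarrow> (lam + t + 1) * rate t = 1"
  using horizon_pos[of t] by (simp add: rate_def)

lemma mu_has_derivative:
  assumes "0 \<le> t" "i < n" "s < m i"
  shows "((\<lambda>\<tau>. mu \<tau> i s) has_real_derivative drift t i s) (at t within {0..})"
  using solution assms unfolding mean_belief_solution_def drift_def noise_def variance_def rate_def
  by simp

lemma rate_has_derivative: "0 \<le> t \<Longrightarrow> (rate has_real_derivative - (rate t)\<^sup>2) (at t within S)"
  unfolding rate_def[abs_def] using horizon_pos[of t]
  by (auto intro!: derivative_eq_intros simp: power2_eq_square)

lemma horizon_has_derivative: "((\<lambda>\<tau>. lam + \<tau> + 1) has_real_derivative 1) (at t within S)"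
  by (auto intro!: derivative_eq_intros)

definition total_variance :: real where
  "total_variance = (\<Sum>j<n. \<Sum>s'<m j. \<sigma>2 j s')"

definition noise_const :: real where
  "noise_const = 3 * (\<beta> * payoff_bound)\<^sup>2 * (lam + 1)\<^sup>2 * total_variance"

lemma noise_const_nonneg: "0 \<le> noise_const"
  unfolding noise_const_def total_variance_def using variance_nonneg
  by (intro mult_nonneg_nonneg sum_nonneg) auto

lemma abs_noise_le:
  assumes t: "0 \<le> t" and i: "i < n" and s: "s < m i"
  shows "\<bar>noise t i s\<bar> \<le> noise_const * rate t ^ 3"
proof -
  have var: "0 \<le> variance t j s'" if "j < n" "s' < m j" for j s'
    using variance_nonneg[OF that] by (simp add: variance_def)
  let ?C = "6 * (\<beta> * payoff_bound)\<^sup>2"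
  have "\<bar>\<Sum>j\<in>N i. \<Sum>s'<m j. partial2 (f i s) (mu t) j s' * variance t j s'\<bar>
      \<le> (\<Sum>j\<in>N i. \<Sum>s'<m j. ?C * variance t j s')"
    by (rule order_trans[OF sum_abs], intro sum_mono, rule order_trans[OF sum_abs], intro sum_mono)
      (auto simp: abs_mult abs_of_nonneg[OF var] nbrs_less
        intro!: mult_right_mono abs_partial2_logit_le[OF i _ _ s] var)
  also have "\<dots> \<le> (\<Sum>j<n. \<Sum>s'<m j. ?C * variance t j s')"
    using nbrs_subset var by (intro sum_mono2) (auto intro!: sum_nonneg mult_nonneg_nonneg)
  also have "\<dots> = ?C * ((lam + 1) / (lam + t + 1))\<^sup>2 * total_variance"
    unfolding variance_def total_variance_def by (simp add: sum_distrib_left mult.assoc)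
  finally have "\<bar>noise t i s\<bar>
    \<le> ?C * ((lam + 1) / (lam + t + 1))\<^sup>2 * total_variance / (2 * (lam + t + 1))"
    unfolding noise_def using horizon_pos[OF t] by (simp add: divide_right_mono)
  also have "\<dots> = noise_const * rate t ^ 3"
  proof -
    define L where "L = lam + t + 1"
    have "L \<noteq> 0" using horizon_pos[OF t] by (simp add: L_def)
    then show ?thesis unfolding noise_const_def rate_def L_def[symmetric]
      by (simp add: power_divide power2_eq_square power3_eq_cube field_simps)
  qed
  finally show ?thesis .
qed

lemma abs_horizon_mult_noise_le:
  assumes "0 \<le> t" "i < n" "s < m i"
  shows "\<bar>(lam + t + 1) * noise t i s\<bar> \<le> noise_const * (rate t)\<^sup>2"
proof -
  have "\<bar>(lam + t + 1) * noise t i s\<bar> \<le> (lam + t + 1) * (noise_const * rate t ^ 3)"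
    using abs_noise_le[OF assms] horizon_pos[OF assms(1)] by (simp add: abs_mult)
  also have "\<dots> = ((lam + t + 1) * rate t) * (noise_const * (rate t)\<^sup>2)"
    by (simp add: power3_eq_cube power2_eq_square algebra_simps)
  finally show ?thesis using horizon_mult_rate[OF assms(1)] by simp
qed

lemma sum_noise:
  assumes i: "i < n"
  shows "(\<Sum>s<m i. noise t i s) = 0"
proof -
  have "(\<Sum>s<m i. \<Sum>j\<in>N i. \<Sum>s'<m j. partial2 (f i s) (mu t) j s' * variance t j s')
      = (\<Sum>j\<in>N i. \<Sum>s<m i. \<Sum>s'<m j. partial2 (f i s) (mu t) j s' * variance t j s')"
    by (rule sum.swap)
  also have "\<dots> = (\<Sum>j\<in>N i. \<Sum>s'<m j. (\<Sum>s<m i. partial2 (f i s) (mu t) j s') * variance t j s')"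
    by (rule sum.cong[OF refl]) (simp add: sum_distrib_right, rule sum.swap)
  also have "\<dots> = 0"
    using sum_partial2_logit[OF i] by simp
  finally show ?thesis unfolding noise_def by (simp add: sum_divide_distrib[symmetric])
qed

text \<open>Logit responses sum to 1 and variance corrections to 0 over each population, so
  (lam + t + 1) * ((\<Sum>s<m i. mu t i s) - 1) is constant.\<close>
lemma sum_mu:
  assumes t: "0 \<le> t" and i: "i < n"
  shows "(\<Sum>s<m i. mu t i s) = 1"
proof -
  define \<phi> where "\<phi> \<tau> = (lam + \<tau> + 1) * ((\<Sum>s<m i. mu \<tau> i s) - 1)" for \<tau>
  have sum_drift: "(\<Sum>s<m i. drift \<tau> i s) = rate \<tau> * (1 - (\<Sum>s<m i. mu \<tau> i s))" for \<tau>
    unfolding drift_def using sum_noise[OF i, of \<tau>] sum_logit[OF i, of "mu \<tau>"]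
    by (simp add: sum.distrib sum_subtractf sum_distrib_left[symmetric])
  have "\<phi> 0 = \<phi> t"
  proof (rule DERIV_within_zero_imp_eq[OF t])
    show "{0..t} \<subseteq> {0..}" by auto
    fix \<tau> assume "0 \<le> \<tau>" "\<tau> \<le> t"
    then have "((\<lambda>\<tau>. \<Sum>s<m i. mu \<tau> i s) has_real_derivative (\<Sum>s<m i. drift \<tau> i s))
      (at \<tau> within {0..})"
      by (intro DERIV_sum mu_has_derivative i) auto
    from DERIV_diff[OF this DERIV_const[of 1]]
    show "(\<phi> has_real_derivative
        1 * ((\<Sum>s<m i. mu \<tau> i s) - 1) + (\<Sum>s<m i. drift \<tau> i s) * (lam + \<tau> + 1)) (at \<tau> within {0..})"
      unfolding \<phi>_def[abs_def] by (intro DERIV_mult horizon_has_derivative) simp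
  next
    fix \<tau> assume "0 < \<tau>" "\<tau> < t"
    then have horizon: "(lam + \<tau> + 1) * rate \<tau> = 1" using horizon_mult_rate by simp
    have regroup: "rate \<tau> * (1 - (\<Sum>s<m i. mu \<tau> i s)) * (lam + \<tau> + 1)
        = ((lam + \<tau> + 1) * rate \<tau>) * (1 - (\<Sum>s<m i. mu \<tau> i s))"
      by (simp add: algebra_simps)
    show "1 * ((\<Sum>s<m i. mu \<tau> i s) - 1) + (\<Sum>s<m i. drift \<tau> i s) * (lam + \<tau> + 1) = 0"
      unfolding sum_drift regroup horizon by simp
  qed
  moreover have "\<phi> 0 = 0" using init_simplices i by (simp add: \<phi>_def in_simplices_def)
  ultimately show ?thesis using horizon_pos[OF t] by (simp add: \<phi>_def)
qed

lemma horizon_mult_mu_ge: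
  assumes t: "0 \<le> t" and i: "i < n" and s: "s < m i"
    and \<kappa>: "\<And>\<tau>. 0 \<le> \<tau> \<Longrightarrow> \<kappa> \<le> f i s (mu \<tau>)"
  shows "\<kappa> * t - noise_const \<le> (lam + t + 1) * mu t i s"
proof -
  define \<psi> where "\<psi> \<tau> = (lam + \<tau> + 1) * mu \<tau> i s - \<kappa> * \<tau> - noise_const * rate \<tau>" for \<tau>
  have "\<psi> 0 \<le> \<psi> t"
  proof (rule DERIV_within_nonneg_imp_le[OF t])
    show "{0..t} \<subseteq> {0..}" by auto
    fix \<tau> assume "0 \<le> \<tau>" "\<tau> \<le> t"
    then show "(\<psi> has_real_derivative
        1 * mu \<tau> i s + drift \<tau> i s * (lam + \<tau> + 1) - \<kappa> * 1 - noise_const * - (rate \<tau>)\<^sup>2)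
          (at \<tau> within {0..})"
      unfolding \<psi>_def[abs_def]
      by (intro DERIV_diff DERIV_mult horizon_has_derivative mu_has_derivative i s DERIV_cmult
          rate_has_derivative DERIV_ident) auto
  next
    fix \<tau> :: real assume \<tau>: "0 < \<tau>" "\<tau> < t"
    have "drift \<tau> i s * (lam + \<tau> + 1)
        = ((lam + \<tau> + 1) * rate \<tau>) * (f i s (mu \<tau>) - mu \<tau> i s) + (lam + \<tau> + 1) * noise \<tau> i s"
      unfolding drift_def by (simp add: algebra_simps)
    then have "drift \<tau> i s * (lam + \<tau> + 1) = f i s (mu \<tau>) - mu \<tau> i s + (lam + \<tau> + 1) * noise \<tau> i s"
      using horizon_mult_rate[of \<tau>] \<tau> by simp
    then show "0 \<le> 1 * mu \<tau> i s + drift \<tau> i s * (lam + \<tau> + 1) - \<kappa> * 1 - noise_const * - (rate \<tau>)\<^sup>2"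
      using \<kappa>[of \<tau>] abs_horizon_mult_noise_le[of \<tau> i s] \<tau> i s by (simp add: abs_le_iff)
  qed
  moreover have "- noise_const \<le> \<psi> 0"
  proof -
    have "0 \<le> (lam + 1) * mu 0 i s"
      using init_simplices i s lam_nonneg by (simp add: in_simplices_def)
    moreover have "rate 0 \<le> 1" using lam_nonneg by (simp add: rate_def)
    then have "noise_const * rate 0 \<le> noise_const" using noise_const_nonneg by (rule mult_left_le)
    ultimately show ?thesis by (simp add: \<psi>_def)
  qed
  moreover have "0 \<le> noise_const * rate t" using noise_const_nonneg rate_pos[OF t] by simp
  ultimately show ?thesis unfolding \<psi>_def by linarith
qed

lemma mu_ge_neg_noise_const:
  assumes t: "0 \<le> t" and i: "i < n" and s: "s < m i"
  shows "- noise_const \<le> mu t i s"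
proof (cases "0 \<le> mu t i s")
  case True
  then show ?thesis using noise_const_nonneg by linarith
next
  case False
  have "0 * t - noise_const \<le> (lam + t + 1) * mu t i s"
    by (rule horizon_mult_mu_ge[OF t i s]) (use logit_pos[OF i] in \<open>simp add: less_imp_le\<close>)
  moreover have "(lam + t + 1) * mu t i s \<le> 1 * mu t i s"
    using False lam_nonneg t by (intro mult_right_mono_neg) auto
  ultimately show ?thesis by simp
qed

lemma m_le_sum_m: "i < n \<Longrightarrow> real (m i) \<le> real (\<Sum>i<n. m i)"
  by (rule of_nat_mono, rule member_le_sum) auto

definition belief_bound :: real where
  "belief_bound = 1 + real (\<Sum>i<n. m i) * noise_const"

lemma abs_mu_le:
  assumes t: "0 \<le> t" and i: "i < n" and s: "s < m i"
  shows "\<bar>mu t i s\<bar> \<le> belief_bound"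
proof -
  have "mu t i s + noise_const \<le> (\<Sum>s<m i. mu t i s + noise_const)"
  proof (rule member_le_sum)
    fix s' assume "s' \<in> {..<m i} - {s}"
    then show "0 \<le> mu t i s' + noise_const" using mu_ge_neg_noise_const[OF t i, of s'] by simp
  qed (use s in simp_all)
  also have "\<dots> = 1 + real (m i) * noise_const" using sum_mu[OF t i] by (simp add: sum.distrib)
  finally have "mu t i s \<le> 1 + real (m i) * noise_const - noise_const" by simp
  moreover have "real (m i) * noise_const \<le> real (\<Sum>i<n. m i) * noise_const"
    using m_le_sum_m[OF i] noise_const_nonneg by (rule mult_right_mono)
  moreover have "noise_const \<le> real (m i) * noise_const"
    using m_pos[OF i] noise_const_nonneg mult_right_mono[of 1 "real (m i)" noise_const] by simp
  ultimately show ?thesis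
    using mu_ge_neg_noise_const[OF t i s] noise_const_nonneg unfolding belief_bound_def abs_le_iff
    by linarith
qed

definition margin :: real where
  "margin = exp (- 2 * \<beta> * belief_bound * payoff_bound) / (real (\<Sum>i<n. m i) + 1)"

lemma margin_pos: "0 < margin"
  unfolding margin_def by (intro divide_pos_pos exp_gt_zero add_nonneg_pos of_nat_0_le_iff) simp

lemma margin_le_logit:
  assumes "0 \<le> t" and i: "i < n" and "s < m i"
  shows "margin \<le> f i s (mu t)"
proof -
  have "real (m i) \<le> real (\<Sum>i<n. m i) + 1"
    using m_le_sum_m[OF i] by linarith
  then have "margin \<le> exp (- 2 * \<beta> * belief_bound * payoff_bound) / m i"
    unfolding margin_def using m_pos[OF i] by (intro divide_left_mono) auto
  also have "\<dots> \<le> f i s (mu t)" by (rule logit_lower_bound[OF abs_mu_le[OF assms(1)] assms(2,3)])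
  finally show ?thesis .
qed

definition T0 :: real where
  "T0 = 2 * noise_const / margin + lam + 1"

lemma T0_pos: "0 < T0"
  unfolding T0_def using noise_const_nonneg margin_pos lam_nonneg by (simp add: add_nonneg_pos)

lemma half_margin_le_mu:
  assumes t: "T0 \<le> t" and i: "i < n" and s: "s < m i"
  shows "margin / 2 \<le> mu t i s"
proof -
  have t0: "0 \<le> t" using t T0_pos by simp
  have "margin * t - noise_const \<le> (lam + t + 1) * mu t i s"
    by (rule horizon_mult_mu_ge[OF t0 i s]) (rule margin_le_logit[OF _ i s])
  moreover have "margin * T0 \<le> margin * t" using t margin_pos by simp
  moreover have "margin * T0 = 2 * noise_const + margin * (lam + 1)"
    unfolding T0_def using margin_pos by (simp add: field_simps)
  ultimately have "(lam + t + 1) * (margin / 2) \<le> (lam + t + 1) * mu t i s"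
    by (simp add: algebra_simps)
  then show ?thesis using horizon_pos[OF t0] by simp
qed

lemma mu_strictly_pos: "T0 \<le> t \<Longrightarrow> strictly_pos (mu t)"
  using half_margin_le_mu[of t] margin_pos unfolding strictly_pos_def
  by (meson half_gt_zero less_le_trans)

lemma mu_in_simplices:
  assumes t: "T0 \<le> t"
  shows "in_simplices n m (mu t)"
proof -
  have "0 \<le> t" using t T0_pos by simp
  then show ?thesis
    using mu_strictly_pos[OF t] sum_mu unfolding strictly_pos_def in_simplices_def
    by (auto simp: less_imp_le)
qed

lemma half_margin_le_logit_mu:
  "T0 \<le> t \<Longrightarrow> i < n \<Longrightarrow> s < m i \<Longrightarrow> margin / 2 \<le> f i s (mu t)"
  using margin_le_logit[of t i s] margin_pos T0_pos by simp

definition pert_const :: real where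
  "pert_const = (\<beta> * payoff_bound - ln (margin / 2) + 1) * noise_const * (\<Sum>i<n. \<omega> i * real (m i))"

lemma pert_const_nonneg: "0 \<le> pert_const"
proof -
  have "0 \<le> belief_bound"
    unfolding belief_bound_def
    by (intro add_nonneg_nonneg mult_nonneg_nonneg of_nat_0_le_iff zero_le_one noise_const_nonneg)
  then have "0 \<le> 2 * \<beta> * belief_bound * payoff_bound"
    using beta_pos payoff_bound_nonneg by (intro mult_nonneg_nonneg) simp_all
  then have "exp (- 2 * \<beta> * belief_bound * payoff_bound) \<le> 1" by simp
  moreover have pos: "0 < real (\<Sum>i<n. m i) + 1"
    by (intro add_nonneg_pos of_nat_0_le_iff zero_less_one)
  ultimately have "margin \<le> 1"
    unfolding margin_def divide_le_eq_1_pos[OF pos] by linarith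
  then have "margin / 2 \<le> 1" by simp
  then have "0 \<le> - ln (margin / 2)" using margin_pos by simp
  moreover have "0 \<le> \<beta> * payoff_bound" using beta_pos payoff_bound_nonneg by simp
  ultimately show ?thesis
    unfolding pert_const_def using noise_const_nonneg
    by (intro mult_nonneg_nonneg weighted_sum_nonneg) auto
qed

definition lyap_noise :: "real \<Rightarrow> real" where
  "lyap_noise t = \<beta> * wpayoff (\<lambda>i s. f i s (mu t)) (noise t)
     + (\<Sum>i<n. \<omega> i * (\<Sum>s<m i. noise t i s * (ln (mu t i s) + 1)))"

lemma lyap_noise_le:
  assumes t: "T0 \<le> t"
  shows "lyap_noise t \<le> pert_const * rate t ^ 3"
proof -
  have t0: "0 \<le> t" using t T0_pos by simp
  define C where "C = (\<beta> * payoff_bound - ln (margin / 2) + 1) * (noise_const * rate t ^ 3)"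
  have noise: "\<bar>noise t j s'\<bar> \<le> noise_const * rate t ^ 3" if "j < n" "s' < m j" for j s'
    by (rule abs_noise_le[OF t0 that])
  have "\<beta> * (f i s (mu t) * util i s (noise t)) + noise t i s * (ln (mu t i s) + 1) \<le> C"
    if i: "i < n" "s < m i" for i s
  proof -
    have "\<bar>f i s (mu t)\<bar> \<le> 1" using logit_pos[OF i(1)] logit_le_1[OF i] by (simp add: abs_of_pos)
    then have "\<bar>f i s (mu t) * util i s (noise t)\<bar> \<le> 1 * (noise_const * rate t ^ 3 * payoff_bound)"
      unfolding abs_mult using abs_util_le[OF noise i] by (intro mult_mono) auto
    then have "\<beta> * (f i s (mu t) * util i s (noise t))
      \<le> \<beta> * (noise_const * rate t ^ 3 * payoff_bound)"
      using beta_pos by (intro mult_left_mono) (auto simp: abs_le_iff)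
    moreover have "\<bar>ln (mu t i s) + 1\<bar> \<le> - ln (margin / 2) + 1"
    proof -
      have "margin / 2 \<le> mu t i s" "mu t i s \<le> 1"
        using half_margin_le_mu[OF t i] in_simplices_le_1[OF mu_in_simplices[OF t] i] by auto
      then have "ln (margin / 2) \<le> ln (mu t i s)" "ln (mu t i s) \<le> 0"
        using margin_pos by auto
      then show ?thesis by linarith
    qed
    then have "\<bar>noise t i s * (ln (mu t i s) + 1)\<bar>
      \<le> (noise_const * rate t ^ 3) * (- ln (margin / 2) + 1)"
      unfolding abs_mult using noise[OF i] by (intro mult_mono) auto
    ultimately show ?thesis unfolding C_def by (simp add: abs_le_iff algebra_simps)
  qed
  then have "(\<Sum>i<n. \<omega> i * (\<Sum>s<m i. \<beta> * (f i s (mu t) * util i s (noise t))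
      + noise t i s * (ln (mu t i s) + 1))) \<le> (\<Sum>i<n. \<omega> i * (\<Sum>s<m i. C))"
    using weight_nonneg by (intro sum_mono mult_left_mono) auto
  also have "\<dots> = pert_const * rate t ^ 3"
    unfolding pert_const_def C_def
    by (simp add: sum.distrib sum_subtractf sum_distrib_left sum_distrib_right algebra_simps)
  finally show ?thesis
    unfolding lyap_noise_def wpayoff_def by (simp add: sum.distrib sum_distrib_left algebra_simps)
qed

lemma lyap_mu_has_derivative:
  assumes t: "T0 \<le> t"
  shows "((\<lambda>\<tau>. lyap (mu \<tau>)) has_real_derivative - rate t * dissipation (mu t) + lyap_noise t)
    (at t within {0..})"
proof -
  have t0: "0 \<le> t" using t T0_pos by simp
  have "((\<lambda>\<tau>. lyap (mu \<tau>)) has_real_derivative lyap_dir (mu t) (drift t)) (at t within {0..})"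
    by (rule lyap_has_derivative)
      (use mu_has_derivative[OF t0] mu_strictly_pos[OF t] in \<open>auto simp: strictly_pos_def\<close>)
  moreover have "lyap_dir (mu t) (drift t) = - rate t * dissipation (mu t) + lyap_noise t"
    unfolding drift_def[abs_def] lyap_dir_flow[OF mu_in_simplices[OF t]] lyap_noise_def by simp
  ultimately show ?thesis by simp
qed

lemma horizon_lyap_deriv_le:
  assumes \<tau>: "T0 \<le> \<tau>"
  shows "lyap (mu \<tau>) + (- rate \<tau> * dissipation (mu \<tau>) + lyap_noise \<tau>) * (lam + \<tau> + 1)
    \<le> pert_const * (rate \<tau>)\<^sup>2"
proof -
  have \<tau>0: "0 \<le> \<tau>" using \<tau> T0_pos by simp
  have "lyap_noise \<tau> * (lam + \<tau> + 1) \<le> pert_const * rate \<tau> ^ 3 * (lam + \<tau> + 1)"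
    using lyap_noise_le[OF \<tau>] horizon_pos[OF \<tau>0] by (intro mult_right_mono) auto
  also have "\<dots> = ((lam + \<tau> + 1) * rate \<tau>) * (pert_const * (rate \<tau>)\<^sup>2)"
    by (simp add: power3_eq_cube power2_eq_square algebra_simps)
  finally have "lyap_noise \<tau> * (lam + \<tau> + 1) \<le> pert_const * (rate \<tau>)\<^sup>2"
    using horizon_mult_rate[OF \<tau>0] by simp
  moreover have "(- rate \<tau> * dissipation (mu \<tau>)) * (lam + \<tau> + 1)
      = - (((lam + \<tau> + 1) * rate \<tau>) * dissipation (mu \<tau>))"
    by (simp add: algebra_simps)
  then have "(- rate \<tau> * dissipation (mu \<tau>)) * (lam + \<tau> + 1) = - dissipation (mu \<tau>)"
    using horizon_mult_rate[OF \<tau>0] by simp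
  moreover have "lyap (mu \<tau>) \<le> dissipation (mu \<tau>)"
    by (rule lyap_le_dissipation[OF mu_in_simplices[OF \<tau>] mu_strictly_pos[OF \<tau>]])
  ultimately show ?thesis by (simp only: distrib_right)
qed

definition lyap_decay_const :: real where
  "lyap_decay_const = (lam + T0 + 1) * lyap (mu T0) + pert_const * rate T0"

text \<open>The function (lam + t + 1) * lyap (mu t) + pert_const * rate t is nonincreasing after T0.\<close>
lemma lyap_mu_le:
  assumes t: "T0 \<le> t"
  shows "lyap (mu t) \<le> lyap_decay_const * rate t"
proof -
  have t0: "0 \<le> t" using t T0_pos by simp
  define \<Phi> where "\<Phi> \<tau> = - ((lam + \<tau> + 1) * lyap (mu \<tau>) + pert_const * rate \<tau>)" for \<tau>
  have "\<Phi> T0 \<le> \<Phi> t"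
  proof (rule DERIV_within_nonneg_imp_le[OF t])
    show "{T0..t} \<subseteq> {0..}" using T0_pos by auto
    fix \<tau> assume "T0 \<le> \<tau>" "\<tau> \<le> t"
    then show "(\<Phi> has_real_derivative
       - ((1 * lyap (mu \<tau>) + (- rate \<tau> * dissipation (mu \<tau>) + lyap_noise \<tau>) * (lam + \<tau> + 1))
          + pert_const * - (rate \<tau>)\<^sup>2)) (at \<tau> within {0..})"
      unfolding \<Phi>_def[abs_def] using T0_pos
      by (intro DERIV_minus DERIV_add DERIV_mult horizon_has_derivative lyap_mu_has_derivative
          DERIV_cmult rate_has_derivative) auto
  next
    fix \<tau> assume "T0 < \<tau>" "\<tau> < t"
    then show "0 \<le> - ((1 * lyap (mu \<tau>)
      + (- rate \<tau> * dissipation (mu \<tau>) + lyap_noise \<tau>) * (lam + \<tau> + 1))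
          + pert_const * - (rate \<tau>)\<^sup>2)"
      using horizon_lyap_deriv_le[of \<tau>] by simp
  qed
  moreover have "0 \<le> pert_const * rate t" using pert_const_nonneg rate_pos[OF t0] by simp
  ultimately have "((lam + t + 1) * lyap (mu t)) * rate t \<le> lyap_decay_const * rate t"
    using rate_pos[OF t0] unfolding \<Phi>_def lyap_decay_const_def by (intro mult_right_mono) auto
  moreover have "((lam + t + 1) * lyap (mu t)) * rate t = ((lam + t + 1) * rate t) * lyap (mu t)"
    by (simp add: algebra_simps)
  ultimately show ?thesis using horizon_mult_rate[OF t0] by simp
qed

lemma rate_tendsto_0: "(rate \<longlongrightarrow> 0) at_top"
proof -
  have "filterlim (\<lambda>t::real. (lam + 1) + t) at_top at_top"
    by (rule filterlim_tendsto_add_at_top[OF tendsto_const filterlim_ident])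
  then have "((\<lambda>t. inverse ((lam + 1) + t)) \<longlongrightarrow> 0) at_top"
    by (rule tendsto_inverse_0_at_top)
  then show ?thesis
    by (simp add: rate_def[abs_def] inverse_eq_divide add_ac)
qed

lemma lyap_mu_tendsto_0: "((\<lambda>t. lyap (mu t)) \<longlongrightarrow> 0) at_top"
proof (rule real_tendsto_sandwich[where f = "\<lambda>_. 0" and h = "\<lambda>t. lyap_decay_const * rate t"])
  show "\<forall>\<^sub>F t in at_top. 0 \<le> lyap (mu t)"
    using eventually_ge_at_top[of T0]
      by eventually_elim (rule lyap_nonneg[OF mu_in_simplices mu_strictly_pos])
  show "\<forall>\<^sub>F t in at_top. lyap (mu t) \<le> lyap_decay_const * rate t"
    using eventually_ge_at_top[of T0] by eventually_elim (rule lyap_mu_le)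
  show "((\<lambda>t. lyap_decay_const * rate t) \<longlongrightarrow> 0) at_top"
    using tendsto_mult_right_zero[OF rate_tendsto_0] by simp
qed simp

lemma mu_gap_tendsto_0:
  assumes i: "i < n" and s: "s < m i"
  shows "((\<lambda>t. mu t i s - f i s (mu t)) \<longlongrightarrow> 0) at_top"
proof (rule Lim_null_comparison)
  show "\<forall>\<^sub>F t in at_top. norm (mu t i s - f i s (mu t)) \<le> 2 * sqrt (lyap (mu t) / \<omega> i)"
    using eventually_ge_at_top[of T0] 
    by eventually_elim (simp add: abs_gap_le_lyap[OF mu_in_simplices mu_strictly_pos i s])
  have "((\<lambda>t. sqrt (lyap (mu t) / \<omega> i)) \<longlongrightarrow> 0) at_top"
    using tendsto_real_sqrt[OF tendsto_divide_zero[OF lyap_mu_tendsto_0]] by simp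
  then show "((\<lambda>t. 2 * sqrt (lyap (mu t) / \<omega> i)) \<longlongrightarrow> 0) at_top"
    by (rule tendsto_mult_right_zero)
qed

lemma mu_tendsto_QRE:
  assumes x: "is_QRE n m E A \<beta> x" and i: "i < n" and s: "s < m i"
  shows "((\<lambda>t. mu t i s) \<longlongrightarrow> x i s) at_top"
proof -
  define gaps where "gaps t = (\<Sum>j<n. \<omega> j * (\<Sum>s<m j. \<bar>mu t j s - f j s (mu t)\<bar>))" for t
  have fixed: "\<And>i s. i < n \<Longrightarrow> s < m i \<Longrightarrow> x i s = f i s x"
    using x by (simp add: is_QRE_def)
  have "((\<lambda>t. mu t i s - x i s) \<longlongrightarrow> 0) at_top"
  proof (rule Lim_null_comparison)
    show "\<forall>\<^sub>F t in at_top. norm (mu t i s - x i s) \<le> sqrt (gaps t / (margin / 2) / \<omega> i)"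
      using eventually_ge_at_top[of T0]
    proof eventually_elim
      case (elim t)
      have "\<omega> i * (mu t i s - x i s)\<^sup>2 \<le> gaps t / (margin / 2)"
        unfolding gaps_def
        by (rule dist_to_fixed_point_le[OF mu_in_simplices[OF elim] mu_strictly_pos[OF elim] _
              trimmed_strictly_pos[OF QRE_in_trimmed[OF x]] fixed _ half_margin_le_mu[OF elim]
              half_margin_le_logit_mu[OF elim] i s])
          (use QRE_in_trimmed[OF x] margin_pos in \<open>auto simp: trimmed_def\<close>)
      then have "(mu t i s - x i s)\<^sup>2 \<le> gaps t / (margin / 2) / \<omega> i"
        unfolding pos_le_divide_eq[OF weight_pos[OF i]] by (simp add: mult.commute)
      then show ?case using real_sqrt_le_mono by fastforce
    qed
    have "(gaps \<longlongrightarrow> 0) at_top"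
      unfolding gaps_def[abs_def]
      by (rule tendsto_null_sum, rule tendsto_mult_right_zero, rule tendsto_null_sum)
        (auto intro: tendsto_rabs_zero mu_gap_tendsto_0)
    then have "((\<lambda>t. gaps t / (margin / 2) / \<omega> i) \<longlongrightarrow> 0) at_top"
      by (intro tendsto_divide_zero)
    from tendsto_real_sqrt[OF this]
    show "((\<lambda>t. sqrt (gaps t / (margin / 2) / \<omega> i)) \<longlongrightarrow> 0) at_top" by simp
  qed
  then show ?thesis by (simp only: LIM_zero_iff)
qed

end

theorem theorem4:
  fixes n :: nat and m :: "nat \<Rightarrow> nat" and E :: "nat \<Rightarrow> nat \<Rightarrow> bool"
    and A :: "nat \<Rightarrow> nat \<Rightarrow> nat \<Rightarrow> nat \<Rightarrow> real"
    and \<beta> lam :: real and \<sigma>2 :: "nat \<Rightarrow> nat \<Rightarrow> real"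
  assumes strat_nonempty: "\<forall>i<n. m i > 0"
    and sym: "\<forall>i j. E i j \<longrightarrow> E j i"
    and irrefl: "\<forall>i. \<not> E i i"
    and comp: "competitive n m E A"
    and beta: "\<beta> > 0" and lam: "lam \<ge> 0"
    and var_nonneg: "\<forall>j<n. \<forall>s<m j. \<sigma>2 j s \<ge> 0"
  shows "\<exists>xstar. is_QRE n m E A \<beta> xstar \<and> (\<forall>y. is_QRE n m E A \<beta> y \<longrightarrow> y = xstar) \<and>
     (\<forall>mu. mean_belief_solution n m E A \<beta> lam \<sigma>2 mu \<and> in_simplices n m (mu 0) \<longrightarrow>
        (\<forall>i<n. \<forall>s<m i. ((\<lambda>t. mu t i s) \<longlongrightarrow> xstar i s) at_top))"
proof -
  from comp obtain \<omega> where "\<forall>i<n. \<omega> i > 0"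
    and "\<forall>x. in_profile n m x \<longrightarrow> (\<Sum>i<n. \<omega> i * payoff n m E A i x) = 0"
    unfolding competitive_def by blast
  then interpret zero_sum_network n m E A \<beta> \<omega>
    using strat_nonempty beta by unfold_locales auto
  obtain x where x: "is_QRE n m E A \<beta> x" using QRE_exists by blast
  moreover have "\<forall>y. is_QRE n m E A \<beta> y \<longrightarrow> y = x" using QRE_unique[OF _ x] by blast
  moreover have "\<forall>i<n. \<forall>s<m i. ((\<lambda>t. mu t i s) \<longlongrightarrow> x i s) at_top"
    if "mean_belief_solution n m E A \<beta> lam \<sigma>2 mu" "in_simplices n m (mu 0)" for mu
  proof -
    interpret belief_dynamics n m E A \<beta> \<omega> lam \<sigma>2 mu
      using lam var_nonneg that by unfold_locales auto
    show ?thesis using mu_tendsto_QRE[OF x] by blast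
  qed
  ultimately show ?thesis by blast
qed

end
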